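(* Let $\lambda>1$, $\mu>1$. Let $\widetilde G$ be the unique rational function for which there exist real $\tilde\beta,\tilde\alpha,\tilde a,\tilde b$ such that: $\widetilde G=P/Q$ with polynomials $\deg P=3$, $\deg Q=2$; $-1$ and $1$ are poles of $\widetilde G$; $\lim_{z\to\infty}\widetilde G(z)/z>0$; $\tilde\beta<-1<\tilde\alpha<\tilde a<1<\tilde b$; $\widetilde G'(\tilde\beta)=\widetilde G'(\tilde\alpha)=\widetilde G'(\tilde a)=\widetilde G'(\tilde b)=0$; $\widetilde G(\tilde\beta)=-\mu$, $\widetilde G(\tilde b)=\lambda$; $-\widetilde G(\tilde\alpha)=\widetilde G(\tilde a)=1$. Let $\widetilde H=c\,\widetilde G$ where $c>0$ is such that $\lim_{z\to\infty}\widetilde H(z)/z=1$. (i) The system $$ \begin{cases} 2\,(a+\alpha)(3-a\alpha-a-\alpha)(3-a\alpha+a+\alpha)+(\lambda-\mu)(a-\alpha)^3=0,\\ (\lambda+\mu)^2(a-\alpha)^6=4\,(3+a\alpha)^3(1-a\alpha)(2+a+\alpha)(2-a-\alpha) \end{cases} $$ has at least one solution $(\alpha,a)$ with $-1<\alpha<a<1$. (ii) Given any such solution, let $\beta<-1$ and $b>1$ be the solutions of $x^2+(a+\alpha)x+\frac{(a-\alpha)^2}{1-a\alpha}-3=0$, put $A=\frac14(1-\beta)(1-\alpha)(1-a)(1-b)$, $B=\frac14(1+\beta)(1+\alpha)(1+a)(1+b)$, $h=\frac14(a+\alpha)\big(2a\alpha-\frac{(a-\alpha)^2}{1-a\alpha}\big)$,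 $H(z)=h+z+\frac{Az}{1-z}+\frac{Bz}{1+z}$ and $G(z)=H(z)/H(a)$. Then $G=\widetilde G$ and $H=\widetilde H$. *)

theory Defs
  imports Complex_Main "HOL-Computational_Algebra.Polynomial"
begin

definition ratfun :: "real poly \<Rightarrow> real poly \<Rightarrow> real \<Rightarrow> real" where
  "ratfun P Q = (\<lambda>z. poly P z / poly Q z)"

definition is_real_pole :: "(real \<Rightarrow> real) \<Rightarrow> real \<Rightarrow> bool" where
  "is_real_pole f x \<longleftrightarrow> filterlim (\<lambda>z. \<bar>f z\<bar>) at_top (at x)"

definition isGtilde :: "real \<Rightarrow> real \<Rightarrow> real poly \<Rightarrow> real poly \<Rightarrow> bool" where
  "isGtilde lam mu P Q \<longleftrightarrow>
     degree P = 3 \<and> degree Q = 2 \<and>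
     is_real_pole (ratfun P Q) (-1) \<and> is_real_pole (ratfun P Q) 1 \<and>
     (\<exists>L>0. ((\<lambda>z. ratfun P Q z / z) \<longlongrightarrow> L) at_top) \<and>
     (\<exists>bt at' ta tb. bt < -1 \<and> -1 < at' \<and> at' < ta \<and> ta < 1 \<and> 1 < tb \<and>
        (ratfun P Q has_real_derivative 0) (at bt) \<and>
        (ratfun P Q has_real_derivative 0) (at at') \<and>
        (ratfun P Q has_real_derivative 0) (at ta) \<and>
        (ratfun P Q has_real_derivative 0) (at tb) \<and>
        ratfun P Q bt = - mu \<and> ratfun P Q tb = lam \<and>
        - ratfun P Q at' = 1 \<and> ratfun P Q ta = 1)"

definition sys :: "real \<Rightarrow> real \<Rightarrow> real \<Rightarrow> real \<Rightarrow> bool" where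
  "sys lam mu \<alpha> a \<longleftrightarrow>
     2 * (a + \<alpha>) * (3 - a*\<alpha> - a - \<alpha>) * (3 - a*\<alpha> + a + \<alpha>) + (lam - mu) * (a - \<alpha>)^3 = 0 \<and>
     (lam + mu)^2 * (a - \<alpha>)^6 =
       4 * (3 + a*\<alpha>)^3 * (1 - a*\<alpha>) * (2 + a + \<alpha>) * (2 - a - \<alpha>)"

definition quad :: "real \<Rightarrow> real \<Rightarrow> real \<Rightarrow> real" where
  "quad \<alpha> a x = x^2 + (a + \<alpha>) * x + (a - \<alpha>)^2 / (1 - a*\<alpha>) - 3"

definition coefA :: "real \<Rightarrow> real \<Rightarrow> real \<Rightarrow> real \<Rightarrow> real" where
  "coefA \<beta> \<alpha> a b = (1/4) * (1 - \<beta>) * (1 - \<alpha>) * (1 - a) * (1 - b)"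

definition coefB :: "real \<Rightarrow> real \<Rightarrow> real \<Rightarrow> real \<Rightarrow> real" where
  "coefB \<beta> \<alpha> a b = (1/4) * (1 + \<beta>) * (1 + \<alpha>) * (1 + a) * (1 + b)"

definition coefh :: "real \<Rightarrow> real \<Rightarrow> real" where
  "coefh \<alpha> a = (1/4) * (a + \<alpha>) * (2*a*\<alpha> - (a - \<alpha>)^2 / (1 - a*\<alpha>))"

definition Hfun :: "real \<Rightarrow> real \<Rightarrow> real \<Rightarrow> real \<Rightarrow> real \<Rightarrow> real" where
  "Hfun \<beta> \<alpha> a b z = coefh \<alpha> a + z + coefA \<beta> \<alpha> a b * z / (1 - z) + coefB \<beta> \<alpha> a b * z / (1 + z)"

definition Gfun :: "real \<Rightarrow> real \<Rightarrow> real \<Rightarrow> real \<Rightarrow> real \<Rightarrow> real" where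
  "Gfun \<beta> \<alpha> a b z = Hfun \<beta> \<alpha> a b z / Hfun \<beta> \<alpha> a b a"

end

theory Submission
  imports Defs "HOL-Real_Asymp.Real_Asymp"
begin

text \<open>
  Put \<open>R(x,y) = (3 + xy)\<^sup>3 (1 - xy) (4 - (x+y)\<^sup>2)\<close> and
  \<open>S(x,y) = (x+y) ((3 - xy)\<^sup>2 - (x+y)\<^sup>2)\<close>. For \<open>-1 < \<alpha> < a < 1\<close> the system says
  exactly \<open>\<lambda> = (\<surd>R - S)/(a - \<alpha>)\<^sup>3\<close> and \<open>\<mu> = (\<surd>R + S)/(a - \<alpha>)\<^sup>3\<close> at \<open>(\<alpha>, a)\<close>.
  On the triangle the first expression decreases in \<open>a\<close> and increases in \<open>\<alpha>\<close>, while
  \<open>S/\<surd>R = (\<mu> - \<lambda>)/(\<mu> + \<lambda>)\<close> increases in both variables; the signs of the partial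
  derivatives reduce to polynomial inequalities certified by polynomials with positive
  coefficients in \<open>1 - a\<close>, \<open>a - \<alpha>\<close>, \<open>1 + \<alpha>\<close>. Hence \<open>(\<alpha>, a) \<mapsto> (\<lambda>, \<mu>)\<close> is injective, and
  the intermediate value theorem along the level curve of \<open>\<lambda>\<close> shows that every
  \<open>\<lambda>, \<mu> > 1\<close> is attained.

  Conversely, a cubic over a quadratic with poles at \<open>\<plusminus>1\<close> is
  \<open>c (e + z + A/(1 - z) - B/(1 + z))\<close>; its critical points are the roots of a quartic, and
  Vieta's formulas express \<open>A\<close>, \<open>B\<close> through them and force
  \<open>\<beta> + \<alpha> + a + b = 0\<close> together with the quadratic relation defining \<open>\<beta>\<close> and \<open>b\<close>.
  The four prescribed critical values then say that the two inner critical points of \<open>P/Q\<close>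
  solve the system, so by injectivity they are the given \<open>\<alpha>, a\<close>, and the constants are
  those of \<open>H\<close>.
\<close>

section \<open>The functions behind the system\<close>

definition rad :: "real \<Rightarrow> real \<Rightarrow> real" where
  "rad x y = (3 + x*y)^3 * (1 - x*y) * (4 - (x+y)^2)"

definition skew :: "real \<Rightarrow> real \<Rightarrow> real" where
  "skew x y = (x+y) * ((3 - x*y)^2 - (x+y)^2)"

definition lam_of :: "real \<Rightarrow> real \<Rightarrow> real" where
  "lam_of x y = (sqrt (rad x y) - skew x y) / (y - x)^3"

definition mu_of :: "real \<Rightarrow> real \<Rightarrow> real" where
  "mu_of x y = (sqrt (rad x y) + skew x y) / (y - x)^3"

definition skew_ratio :: "real \<Rightarrow> real \<Rightarrow> real" where
  "skew_ratio x y = skew x y / sqrt (rad x y)"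

lemma rad_swap: "rad y x = rad x y"
  unfolding rad_def by (simp add: algebra_simps)

lemma skew_swap: "skew y x = skew x y"
  unfolding skew_def by (simp add: algebra_simps)

lemma rad_reflect: "rad (-y) (-x) = rad x y"
  unfolding rad_def by algebra

lemma skew_reflect: "skew (-y) (-x) = - skew x y"
  unfolding skew_def by algebra

lemma lam_of_swap: "lam_of y x = - lam_of x y"
proof -
  have "(x - y)^3 = - ((y - x)^3 :: real)" by algebra
  then show ?thesis unfolding lam_of_def by (simp add: rad_swap skew_swap)
qed

lemma mu_of_eq_lam_of_reflect: "mu_of x y = lam_of (-y) (-x)"
  unfolding mu_of_def lam_of_def by (simp add: rad_reflect skew_reflect)

lemma skew_ratio_swap: "skew_ratio y x = skew_ratio x y"
  unfolding skew_ratio_def by (simp add: rad_swap skew_swap)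

lemma skew_ratio_reflect: "skew_ratio (-y) (-x) = - skew_ratio x y"
  unfolding skew_ratio_def by (simp add: rad_reflect skew_reflect)

lemma one_minus_mult_pos:
  fixes x y :: real
  assumes "-1 \<le> x" "x < y" "y \<le> 1"
  shows "0 < 1 - x*y"
proof -
  have "0 < (1 - x) * (1 + y)" "0 \<le> (1 + x) * (1 - y)"
    using assms by (auto intro: mult_pos_pos mult_nonneg_nonneg)
  then show ?thesis by (simp add: algebra_simps)
qed

lemma rad_pos:
  fixes x y :: real
  assumes "-1 \<le> x" "x < y" "y \<le> 1"
  shows "0 < rad x y"
proof -
  have "\<bar>x*y\<bar> \<le> 1"
    using assms by (simp add: abs_mult mult_le_one)
  then have "0 < 3 + x*y" by linarith
  moreover have "0 < (2 - (x+y)) * (2 + (x+y))"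
    using assms by (intro mult_pos_pos) auto
  moreover have "4 - (x+y)^2 = (2 - (x+y)) * (2 + (x+y))"
    by algebra
  ultimately show ?thesis
    unfolding rad_def using one_minus_mult_pos[OF assms] by simp
qed

lemma isCont_lam_of_fst: "x \<noteq> y \<Longrightarrow> isCont (\<lambda>x. lam_of x y) x"
  unfolding lam_of_def rad_def skew_def by (intro continuous_intros) auto

lemma isCont_lam_of_snd: "x \<noteq> y \<Longrightarrow> isCont (\<lambda>y. lam_of x y) y"
  unfolding lam_of_def rad_def skew_def by (intro continuous_intros) auto

lemma isCont_mu_of_fst: "x \<noteq> y \<Longrightarrow> isCont (\<lambda>x. mu_of x y) x"
  unfolding mu_of_def rad_def skew_def by (intro continuous_intros) auto

lemma sys_iff_lam_of_mu_of:
  assumes "-1 < \<alpha>" "\<alpha> < a" "a < 1" "0 \<le> lam + mu"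
  shows "sys lam mu \<alpha> a \<longleftrightarrow> lam_of \<alpha> a = lam \<and> mu_of \<alpha> a = mu"
proof -
  define W where "W = sqrt (rad \<alpha> a)"
  have W: "0 < W" "W^2 = rad \<alpha> a"
    using rad_pos[of \<alpha> a] assms by (simp_all add: W_def)
  have d: "0 < (a - \<alpha>)^3" using assms by simp
  have skew: "2 * (a + \<alpha>) * (3 - a*\<alpha> - a - \<alpha>) * (3 - a*\<alpha> + a + \<alpha>) = 2 * skew \<alpha> a"
    unfolding skew_def by algebra
  have "(2 * W)^2 = 4 * rad \<alpha> a"
    using W(2) by (simp add: power_mult_distrib)
  then have rad: "4 * (3 + a*\<alpha>)^3 * (1 - a*\<alpha>) * (2 + a + \<alpha>) * (2 - a - \<alpha>) = (2 * W)^2"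
    unfolding rad_def by algebra
  have sq: "(lam + mu)^2 * (a - \<alpha>)^6 = ((lam + mu) * (a - \<alpha>)^3)^2"
    by algebra
  have "sys lam mu \<alpha> a \<longleftrightarrow>
        (lam - mu) * (a - \<alpha>)^3 = - 2 * skew \<alpha> a \<and> ((lam + mu) * (a - \<alpha>)^3)^2 = (2 * W)^2"
    unfolding sys_def skew rad sq by linarith
  also have "\<dots> \<longleftrightarrow> (lam - mu) * (a - \<alpha>)^3 = - 2 * skew \<alpha> a \<and> (lam + mu) * (a - \<alpha>)^3 = 2 * W"
    using W d assms by (subst power2_eq_iff_nonneg) auto
  also have "\<dots> \<longleftrightarrow> W - skew \<alpha> a = lam * (a - \<alpha>)^3 \<and> W + skew \<alpha> a = mu * (a - \<alpha>)^3"
    by (auto simp: algebra_simps)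
  also have "\<dots> \<longleftrightarrow> lam_of \<alpha> a = lam \<and> mu_of \<alpha> a = mu"
    unfolding lam_of_def mu_of_def W_def[symmetric] using d by (auto simp: field_simps)
  finally show ?thesis .
qed

section \<open>Positivity certificates\<close>

definition rad_dy :: "real \<Rightarrow> real \<Rightarrow> real" where
  "rad_dy x y = - 4*x^2*y*(3 + x*y)^2*(4 - (x+y)^2) - 2*(x+y)*(3 + x*y)^3*(1 - x*y)"

definition skew_dy :: "real \<Rightarrow> real \<Rightarrow> real" where
  "skew_dy x y = (3 - x*y)^2 - (x+y)^2 - 2*(x+y)*(x*(3 - x*y) + (x+y))"

lemma rad_has_derivative_snd: "((\<lambda>y. rad x y) has_real_derivative rad_dy x y) (at y)"
  unfolding rad_def rad_dy_def by (rule derivative_eq_intros refl | simp)+ algebra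

lemma skew_has_derivative_snd: "((\<lambda>y. skew x y) has_real_derivative skew_dy x y) (at y)"
  unfolding skew_def skew_dy_def by (rule derivative_eq_intros refl | simp)+ algebra

(* The numerator of the y-derivative of lam_of is lam_dy_rat + lam_dy_irr * sqrt rad
   (lam_of_has_derivative_snd). *)
definition lam_dy_rat :: "real \<Rightarrow> real \<Rightarrow> real" where
  "lam_dy_rat x y = rad_dy x y * (y - x) - 6 * rad x y"

definition lam_dy_irr :: "real \<Rightarrow> real \<Rightarrow> real" where
  "lam_dy_irr x y = 6 * skew x y - 2 * (y - x) * skew_dy x y"

definition skew_ratio_dy_numer :: "real \<Rightarrow> real \<Rightarrow> real" where
  "skew_ratio_dy_numer x y = 2 * rad x y * skew_dy x y - skew x y * rad_dy x y"

(* Each certificate is a polynomial with positive coefficients, to be evaluated at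
   w = 1 - y, v = y - x, u = 1 + x; so it is positive on the open triangle -1 < x < y < 1. *)
definition lam_dy_cert_A :: "real \<Rightarrow> real \<Rightarrow> real \<Rightarrow> real" where
  "lam_dy_cert_A w v u =
     8192*v^2*u^8 + 45056*v^3*u^7 + 108544*v^4*u^6 + 150528*v^5*u^5 + 132096*v^6*u^4 + 75264*v^7*u^3
      + 27136*v^8*u^2 + 5632*v^9*u + 512*v^10 + 28672*w*v*u^8 + 176128*w*v^2*u^7 + 490496*w*v^3*u^6
      + 798720*w*v^4*u^5 + 823296*w*v^5*u^4 + 546816*w*v^6*u^3 + 227840*w*v^7*u^2 + 54272*w*v^8*u
      + 5632*w*v^9 + 24576*w^2*u^8 + 210944*w^2*v*u^7 + 796672*w^2*v^2*u^6 + 1666560*w^2*v^3*u^5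
      + 2115072*w^2*v^4*u^4 + 1680384*w^2*v^5*u^3 + 820224*w^2*v^6*u^2 + 225280*w^2*v^7*u
      + 26624*w^2*v^8 + 73728*w^3*u^7 + 559104*w^3*v*u^6 + 1716224*w^3*v^2*u^5 + 2869760*w^3*v^3*u^4
      + 2836480*w^3*v^4*u^3 + 1655808*w^3*v^5*u^2 + 528384*w^3*v^6*u + 70656*w^3*v^7
      + 147456*w^4*u^6 + 870400*w^4*v*u^5 + 2172928*w^4*v^2*u^4 + 2842112*w^4*v^3*u^3
      + 2050560*w^4*v^4*u^2 + 769536*w^4*v^5*u + 115200*w^4*v^6 + 172032*w^5*u^5 + 874496*w^5*v*u^4
      + 1687552*w^5*v^2*u^3 + 1595904*w^5*v^3*u^2 + 715776*w^5*v^4*u + 118272*w^5*v^5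
      + 147456*w^6*u^4 + 546816*w^6*v*u^3 + 763904*w^6*v^2*u^2 + 416768*w^6*v^3*u + 74752*w^6*v^4
      + 73728*w^7*u^3 + 206848*w^7*v*u^2 + 139264*w^7*v^2*u + 26624*w^7*v^3 + 24576*w^8*u^2
      + 20480*w^8*v*u + 4096*w^8*v^2"

definition lam_dy_cert_B :: "real \<Rightarrow> real \<Rightarrow> real \<Rightarrow> real" where
  "lam_dy_cert_B w v u =
     134217728*v^6*u^12 + 1073741824*v^7*u^11 + 3858759680*v^8*u^10 + 8220835840*v^9*u^9
      + 11534336000*v^10*u^8 + 11190403072*v^11*u^7 + 7660896256*v^12*u^6 + 3701473280*v^13*u^5
      + 1237319680*v^14*u^4 + 272629760*v^15*u^3 + 35651584*v^16*u^2 + 2097152*v^17*u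
      + 1543503872*w*v^5*u^12 + 12381585408*w*v^6*u^11 + 44962938880*w*v^7*u^10
      + 97559511040*w*v^8*u^9 + 140488212480*w*v^9*u^8 + 140905545728*w*v^10*u^7
      + 100371791872*w*v^11*u^6 + 50740592640*w*v^12*u^5 + 17825792000*w*v^13*u^4
      + 4141875200*w*v^14*u^3 + 572522496*w*v^15*u^2 + 35651584*w*v^16*u + 7147094016*w^2*v^4*u^12
      + 58518929408*w^2*v^5*u^11 + 219060109312*w^2*v^6*u^10 + 494005125120*w^2*v^7*u^9
      + 744063238144*w^2*v^8*u^8 + 784112549888*w^2*v^9*u^7 + 588622331904*w^2*v^10*u^6
      + 314130300928*w^2*v^11*u^5 + 116595359744*w^2*v^12*u^4 + 28626124800*w^2*v^13*u^3
      + 4179623936*w^2*v^14*u^2 + 274726912*w^2*v^15*u + 17062428672*w^3*v^3*u^12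
      + 146641256448*w^3*v^4*u^11 + 582811123712*w^3*v^5*u^10 + 1403831451648*w^3*v^6*u^9
      + 2263131095040*w^3*v^7*u^8 + 2551585964032*w^3*v^8*u^7 + 2045551575040*w^3*v^9*u^6
      + 1162833035264*w^3*v^10*u^5 + 458397581312*w^3*v^11*u^4 + 119149690880*w^3*v^12*u^3
      + 18356371456*w^3*v^13*u^2 + 1268776960*w^3*v^14*u + 22196256768*w^4*v^2*u^12
      + 209958469632*w^4*v^3*u^11 + 927146704896*w^4*v^4*u^10 + 2475291574272*w^4*v^5*u^9
      + 4391914438656*w^4*v^6*u^8 + 5406134894592*w^4*v^7*u^7 + 4694871113728*w^4*v^8*u^6
      + 2869935734784*w^4*v^9*u^5 + 1208100061184*w^4*v^10*u^4 + 333059194880*w^4*v^11*u^3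
      + 54062481408*w^4*v^12*u^2 + 3911188480*w^4*v^13*u + 14948499456*w^5*v*u^12
      + 171001774080*w^5*v^2*u^11 + 904950448128*w^5*v^3*u^10 + 2819056730112*w^5*v^4*u^9
      + 5698410774528*w^5*v^5*u^8 + 7841664466944*w^5*v^6*u^7 + 7497546989568*w^5*v^7*u^6
      + 4980478050304*w^5*v^8*u^5 + 2251840028672*w^5*v^9*u^4 + 659596247040*w^5*v^10*u^3
      + 112581410816*w^5*v^11*u^2 + 8478785536*w^5*v^12*u + 4076863488*w^6*u^12
      + 72704065536*w^6*v*u^11 + 531464454144*w^6*v^2*u^10 + 2081635172352*w^6*v^3*u^9
      + 5016448401408*w^6*v^4*u^8 + 7950991097856*w^6*v^5*u^7 + 8535807098880*w^6*v^6*u^6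
      + 6237928292352*w^6*v^7*u^5 + 3049001058304*w^6*v^8*u^4 + 950366371840*w^6*v^9*u^3
      + 170110484480*w^6*v^10*u^2 + 13256097792*w^6*v^11*u + 12230590464*w^7*u^11
      + 173266698240*w^7*v*u^10 + 963611983872*w^7*v^2*u^9 + 2962011193344*w^7*v^3*u^8
      + 5634565079040*w^7*v^4*u^7 + 6967573610496*w^7*v^5*u^6 + 5687507681280*w^7*v^6*u^5
      + 3027555581952*w^7*v^7*u^4 + 1005322240000*w^7*v^8*u^3 + 188045328384*w^7*v^9*u^2
      + 15063842816*w^7*v^10*u + 24461180928*w^8*u^10 + 253445013504*w^8*v*u^9
      + 1123628875776*w^8*v^2*u^8 + 2731894898688*w^8*v^3*u^7 + 4033697808384*w^8*v^4*u^6
      + 3751872036864*w^8*v^5*u^5 + 2193308516352*w^8*v^6*u^4 + 776082554880*w^8*v^7*u^3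
      + 151011721216*w^8*v^8*u^2 + 12352225280*w^8*v^9*u + 28538044416*w^9*u^9
      + 248009195520*w^9*v*u^8 + 860331442176*w^9*v^2*u^7 + 1606454083584*w^9*v^3*u^6
      + 1750465511424*w^9*v^4*u^5 + 1133902823424*w^9*v^5*u^4 + 427011604480*w^9*v^6*u^3
      + 85949677568*w^9*v^7*u^2 + 7130316800*w^9*v^8*u + 24461180928*w^10*u^8
      + 156959244288*w^10*v*u^7 + 414594367488*w^10*v^2*u^6 + 550716309504*w^10*v^3*u^5
      + 398513405952*w^10*v^4*u^4 + 159152865280*w^10*v^5*u^3 + 32916897792*w^10*v^6*u^2
      + 2751463424*w^10*v^7*u + 12230590464*w^11*u^7 + 61832429568*w^11*v*u^6
      + 105771958272*w^11*v^2*u^5 + 85840625664*w^11*v^3*u^4 + 36112957440*w^11*v^4*u^3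
      + 7616856064*w^11*v^5*u^2 + 637534208*w^11*v^6*u + 4076863488*w^12*u^6 + 9512681472*w^12*v*u^5
      + 8606711808*w^12*v^2*u^4 + 3774873600*w^12*v^3*u^3 + 805306368*w^12*v^4*u^2
      + 67108864*w^12*v^5*u"

definition lam_dx_cert_A :: "real \<Rightarrow> real \<Rightarrow> real \<Rightarrow> real" where
  "lam_dx_cert_A w v u =
     4096*v^2*u^8 + 26624*v^3*u^7 + 74752*v^4*u^6 + 118272*v^5*u^5 + 115200*v^6*u^4 + 70656*v^7*u^3
      + 26624*v^8*u^2 + 5632*v^9*u + 512*v^10 + 20480*w*v*u^8 + 139264*w*v^2*u^7 + 416768*w*v^3*u^6
      + 715776*w*v^4*u^5 + 769536*w*v^5*u^4 + 528384*w*v^6*u^3 + 225280*w*v^7*u^2 + 54272*w*v^8*u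
      + 5632*w*v^9 + 24576*w^2*u^8 + 206848*w^2*v*u^7 + 763904*w^2*v^2*u^6 + 1595904*w^2*v^3*u^5
      + 2050560*w^2*v^4*u^4 + 1655808*w^2*v^5*u^3 + 820224*w^2*v^6*u^2 + 227840*w^2*v^7*u
      + 27136*w^2*v^8 + 73728*w^3*u^7 + 546816*w^3*v*u^6 + 1687552*w^3*v^2*u^5 + 2842112*w^3*v^3*u^4
      + 2836480*w^3*v^4*u^3 + 1680384*w^3*v^5*u^2 + 546816*w^3*v^6*u + 75264*w^3*v^7
      + 147456*w^4*u^6 + 874496*w^4*v*u^5 + 2172928*w^4*v^2*u^4 + 2869760*w^4*v^3*u^3
      + 2115072*w^4*v^4*u^2 + 823296*w^4*v^5*u + 132096*w^4*v^6 + 172032*w^5*u^5 + 870400*w^5*v*u^4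
      + 1716224*w^5*v^2*u^3 + 1666560*w^5*v^3*u^2 + 798720*w^5*v^4*u + 150528*w^5*v^5
      + 147456*w^6*u^4 + 559104*w^6*v*u^3 + 796672*w^6*v^2*u^2 + 490496*w^6*v^3*u + 108544*w^6*v^4
      + 73728*w^7*u^3 + 210944*w^7*v*u^2 + 176128*w^7*v^2*u + 45056*w^7*v^3 + 24576*w^8*u^2
      + 28672*w^8*v*u + 8192*w^8*v^2"

definition lam_dx_cert_B :: "real \<Rightarrow> real \<Rightarrow> real \<Rightarrow> real" where
  "lam_dx_cert_B w v u =
     67108864*w*v^5*u^12 + 637534208*w*v^6*u^11 + 2751463424*w*v^7*u^10 + 7130316800*w*v^8*u^9
      + 12352225280*w*v^9*u^8 + 15063842816*w*v^10*u^7 + 13256097792*w*v^11*u^6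
      + 8478785536*w*v^12*u^5 + 3911188480*w*v^13*u^4 + 1268776960*w*v^14*u^3 + 274726912*w*v^15*u^2
      + 35651584*w*v^16*u + 2097152*w*v^17 + 805306368*w^2*v^4*u^12 + 7616856064*w^2*v^5*u^11
      + 32916897792*w^2*v^6*u^10 + 85949677568*w^2*v^7*u^9 + 151011721216*w^2*v^8*u^8
      + 188045328384*w^2*v^9*u^7 + 170110484480*w^2*v^10*u^6 + 112581410816*w^2*v^11*u^5
      + 54062481408*w^2*v^12*u^4 + 18356371456*w^2*v^13*u^3 + 4179623936*w^2*v^14*u^2
      + 572522496*w^2*v^15*u + 35651584*w^2*v^16 + 3774873600*w^3*v^3*u^12
      + 36112957440*w^3*v^4*u^11 + 159152865280*w^3*v^5*u^10 + 427011604480*w^3*v^6*u^9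
      + 776082554880*w^3*v^7*u^8 + 1005322240000*w^3*v^8*u^7 + 950366371840*w^3*v^9*u^6
      + 659596247040*w^3*v^10*u^5 + 333059194880*w^3*v^11*u^4 + 119149690880*w^3*v^12*u^3
      + 28626124800*w^3*v^13*u^2 + 4141875200*w^3*v^14*u + 272629760*w^3*v^15
      + 8606711808*w^4*v^2*u^12 + 85840625664*w^4*v^3*u^11 + 398513405952*w^4*v^4*u^10
      + 1133902823424*w^4*v^5*u^9 + 2193308516352*w^4*v^6*u^8 + 3027555581952*w^4*v^7*u^7
      + 3049001058304*w^4*v^8*u^6 + 2251840028672*w^4*v^9*u^5 + 1208100061184*w^4*v^10*u^4
      + 458397581312*w^4*v^11*u^3 + 116595359744*w^4*v^12*u^2 + 17825792000*w^4*v^13*u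
      + 1237319680*w^4*v^14 + 9512681472*w^5*v*u^12 + 105771958272*w^5*v^2*u^11
      + 550716309504*w^5*v^3*u^10 + 1750465511424*w^5*v^4*u^9 + 3751872036864*w^5*v^5*u^8
      + 5687507681280*w^5*v^6*u^7 + 6237928292352*w^5*v^7*u^6 + 4980478050304*w^5*v^8*u^5
      + 2869935734784*w^5*v^9*u^4 + 1162833035264*w^5*v^10*u^3 + 314130300928*w^5*v^11*u^2
      + 50740592640*w^5*v^12*u + 3701473280*w^5*v^13 + 4076863488*w^6*u^12 + 61832429568*w^6*v*u^11
      + 414594367488*w^6*v^2*u^10 + 1606454083584*w^6*v^3*u^9 + 4033697808384*w^6*v^4*u^8
      + 6967573610496*w^6*v^5*u^7 + 8535807098880*w^6*v^6*u^6 + 7497546989568*w^6*v^7*u^5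
      + 4694871113728*w^6*v^8*u^4 + 2045551575040*w^6*v^9*u^3 + 588622331904*w^6*v^10*u^2
      + 100371791872*w^6*v^11*u + 7660896256*w^6*v^12 + 12230590464*w^7*u^11
      + 156959244288*w^7*v*u^10 + 860331442176*w^7*v^2*u^9 + 2731894898688*w^7*v^3*u^8
      + 5634565079040*w^7*v^4*u^7 + 7950991097856*w^7*v^5*u^6 + 7841664466944*w^7*v^6*u^5
      + 5406134894592*w^7*v^7*u^4 + 2551585964032*w^7*v^8*u^3 + 784112549888*w^7*v^9*u^2
      + 140905545728*w^7*v^10*u + 11190403072*w^7*v^11 + 24461180928*w^8*u^10
      + 248009195520*w^8*v*u^9 + 1123628875776*w^8*v^2*u^8 + 2962011193344*w^8*v^3*u^7
      + 5016448401408*w^8*v^4*u^6 + 5698410774528*w^8*v^5*u^5 + 4391914438656*w^8*v^6*u^4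
      + 2263131095040*w^8*v^7*u^3 + 744063238144*w^8*v^8*u^2 + 140488212480*w^8*v^9*u
      + 11534336000*w^8*v^10 + 28538044416*w^9*u^9 + 253445013504*w^9*v*u^8
      + 963611983872*w^9*v^2*u^7 + 2081635172352*w^9*v^3*u^6 + 2819056730112*w^9*v^4*u^5
      + 2475291574272*w^9*v^5*u^4 + 1403831451648*w^9*v^6*u^3 + 494005125120*w^9*v^7*u^2
      + 97559511040*w^9*v^8*u + 8220835840*w^9*v^9 + 24461180928*w^10*u^8 + 173266698240*w^10*v*u^7
      + 531464454144*w^10*v^2*u^6 + 904950448128*w^10*v^3*u^5 + 927146704896*w^10*v^4*u^4
      + 582811123712*w^10*v^5*u^3 + 219060109312*w^10*v^6*u^2 + 44962938880*w^10*v^7*u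
      + 3858759680*w^10*v^8 + 12230590464*w^11*u^7 + 72704065536*w^11*v*u^6
      + 171001774080*w^11*v^2*u^5 + 209958469632*w^11*v^3*u^4 + 146641256448*w^11*v^4*u^3
      + 58518929408*w^11*v^5*u^2 + 12381585408*w^11*v^6*u + 1073741824*w^11*v^7
      + 4076863488*w^12*u^6 + 14948499456*w^12*v*u^5 + 22196256768*w^12*v^2*u^4
      + 17062428672*w^12*v^3*u^3 + 7147094016*w^12*v^4*u^2 + 1543503872*w^12*v^5*u
      + 134217728*w^12*v^6"

definition skew_ratio_cert :: "real \<Rightarrow> real \<Rightarrow> real \<Rightarrow> real" where
  "skew_ratio_cert w v u =
     16384*v^4*u^8 + 106496*v^5*u^7 + 299008*v^6*u^6 + 473088*v^7*u^5 + 460800*v^8*u^4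
      + 282624*v^9*u^3 + 106496*v^10*u^2 + 22528*v^11*u + 2048*v^12 + 212992*w*v^3*u^8
      + 1343488*w*v^4*u^7 + 3698688*w*v^5*u^6 + 5812224*w*v^6*u^5 + 5707776*w*v^7*u^4
      + 3588096*w*v^8*u^3 + 1409024*w*v^9*u^2 + 315392*w*v^10*u + 30720*w*v^11 + 884736*w^2*v^2*u^8
      + 5611520*w^2*v^3*u^7 + 15802368*w^2*v^4*u^6 + 25798656*w^2*v^5*u^5 + 26658816*w^2*v^6*u^4
      + 17805312*w^2*v^7*u^3 + 7483392*w^2*v^8*u^2 + 1804288*w^2*v^9*u + 190464*w^2*v^10
      + 1474560*w^3*v*u^8 + 10027008*w^3*v^2*u^7 + 30965760*w^3*v^3*u^6 + 55902208*w^3*v^4*u^5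
      + 63789056*w^3*v^5*u^4 + 46784512*w^3*v^6*u^3 + 21467136*w^3*v^7*u^2 + 5627904*w^3*v^8*u
      + 645120*w^3*v^9 + 884736*w^4*u^8 + 7667712*w^4*v*u^7 + 30007296*w^4*v^2*u^6
      + 65781760*w^4*v^3*u^5 + 87580672*w^4*v^4*u^4 + 72787968*w^4*v^5*u^3 + 37066752*w^4*v^6*u^2
      + 10616832*w^4*v^7*u + 1314816*w^4*v^8 + 1769472*w^5*u^7 + 13860864*w^5*v*u^6
      + 42909696*w^5*v^2*u^5 + 71352320*w^5*v^3*u^4 + 69697536*w^5*v^4*u^3 + 40040448*w^5*v^5*u^2
      + 12533760*w^5*v^6*u + 1658880*w^5*v^7 + 2654208*w^6*u^6 + 14450688*w^6*v*u^5
      + 33546240*w^6*v^2*u^4 + 40697856*w^6*v^3*u^3 + 26804224*w^6*v^4*u^2 + 9113600*w^6*v^5*u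
      + 1269760*w^6*v^6 + 1769472*w^7*u^5 + 8257536*w^7*v*u^4 + 13565952*w^7*v^2*u^3
      + 10313728*w^7*v^3*u^2 + 3751936*w^7*v^4*u + 540672*w^7*v^5 + 884736*w^8*u^4
      + 2064384*w^8*v*u^3 + 1769472*w^8*v^2*u^2 + 671744*w^8*v^3*u + 98304*w^8*v^4"

lemma lam_dy_cert_A_id:
  "lam_dy_rat x y = - lam_dy_cert_A (1 - y) (y - x) (1 + x) / 2^10"
  unfolding lam_dy_rat_def rad_dy_def rad_def lam_dy_cert_A_def by algebra

lemma lam_dy_cert_B_id:
  "(lam_dy_rat x y)^2 - (lam_dy_irr x y)^2 * rad x y = lam_dy_cert_B (1 - y) (y - x) (1 + x) / 2^18"
  unfolding lam_dy_rat_def lam_dy_irr_def rad_dy_def rad_def skew_def skew_dy_def lam_dy_cert_B_def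
  by algebra

lemma lam_dx_cert_A_id:
  "lam_dy_rat y x = - lam_dx_cert_A (1 - y) (y - x) (1 + x) / 2^10"
  unfolding lam_dy_rat_def rad_dy_def rad_def lam_dx_cert_A_def by algebra

lemma lam_dx_cert_B_id:
  "(lam_dy_rat y x)^2 - (lam_dy_irr y x)^2 * rad x y = lam_dx_cert_B (1 - y) (y - x) (1 + x) / 2^18"
  unfolding lam_dy_rat_def lam_dy_irr_def rad_dy_def rad_def skew_def skew_dy_def lam_dx_cert_B_def
  by algebra

lemma skew_ratio_cert_id:
  "skew_ratio_dy_numer y x = skew_ratio_cert (1 - y) (y - x) (1 + x) / 2^12"
  unfolding skew_ratio_dy_numer_def rad_dy_def rad_def skew_def skew_dy_def skew_ratio_cert_def
  by algebra

lemma lam_dy_cert_A_pos: "0 < w \<Longrightarrow> 0 < v \<Longrightarrow> 0 < u \<Longrightarrow> 0 < lam_dy_cert_A w v u"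
  unfolding lam_dy_cert_A_def by (intro add_pos_pos mult_pos_pos zero_less_power; simp)

lemma lam_dy_cert_B_pos: "0 < w \<Longrightarrow> 0 < v \<Longrightarrow> 0 < u \<Longrightarrow> 0 < lam_dy_cert_B w v u"
  unfolding lam_dy_cert_B_def by (intro add_pos_pos mult_pos_pos zero_less_power; simp)

lemma lam_dx_cert_A_pos: "0 < w \<Longrightarrow> 0 < v \<Longrightarrow> 0 < u \<Longrightarrow> 0 < lam_dx_cert_A w v u"
  unfolding lam_dx_cert_A_def by (intro add_pos_pos mult_pos_pos zero_less_power; simp)

lemma lam_dx_cert_B_pos: "0 < w \<Longrightarrow> 0 < v \<Longrightarrow> 0 < u \<Longrightarrow> 0 < lam_dx_cert_B w v u"
  unfolding lam_dx_cert_B_def by (intro add_pos_pos mult_pos_pos zero_less_power; simp)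

lemma skew_ratio_cert_pos: "0 < w \<Longrightarrow> 0 < v \<Longrightarrow> 0 < u \<Longrightarrow> 0 < skew_ratio_cert w v u"
  unfolding skew_ratio_cert_def by (intro add_pos_pos mult_pos_pos zero_less_power; simp)

section \<open>Monotonicity and injectivity\<close>

lemma lam_of_has_derivative_snd:
  assumes "0 < rad x y" "x \<noteq> y"
  shows "((\<lambda>y. lam_of x y) has_real_derivative
           (lam_dy_rat x y + lam_dy_irr x y * sqrt (rad x y)) / (2 * sqrt (rad x y) * (y - x)^4)) (at y)"
proof -
  define W where "W = sqrt (rad x y)"
  have W: "0 < W" "W * W = rad x y"
    using assms by (simp_all add: W_def)
  have d: "y - x \<noteq> 0" using assms by simp
  have "((\<lambda>y. sqrt (rad x y)) has_real_derivative inverse (sqrt (rad x y)) / 2 * rad_dy x y) (at y)"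
    by (rule DERIV_chain2[OF DERIV_real_sqrt[OF assms(1)] rad_has_derivative_snd])
  then have dW: "((\<lambda>y. sqrt (rad x y)) has_real_derivative rad_dy x y / (2 * W)) (at y)"
    by (rule DERIV_cong) (simp add: W_def field_simps)
  have dD: "((\<lambda>y. (y - x)^3) has_real_derivative 3 * (y - x)^2) (at y)"
    by (rule derivative_eq_intros refl | simp)+
  have "((\<lambda>y. lam_of x y) has_real_derivative
     ((rad_dy x y / (2 * W) - skew_dy x y) * (y - x)^3 - (sqrt (rad x y) - skew x y) * (3 * (y - x)^2))
       / ((y - x)^3 * (y - x)^3)) (at y)"
    unfolding lam_of_def using d by (intro DERIV_divide DERIV_diff dW skew_has_derivative_snd dD) simp
  then have "((\<lambda>y. lam_of x y) has_real_derivative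
     ((rad_dy x y / (2 * W) - skew_dy x y) * (y - x)^3 - (W - skew x y) * (3 * (y - x)^2))
       / ((y - x)^3 * (y - x)^3)) (at y)"
    by (simp only: W_def)
  moreover have "((rad_dy x y / (2 * W) - skew_dy x y) * (y - x)^3 - (W - skew x y) * (3 * (y - x)^2))
       / ((y - x)^3 * (y - x)^3)
     = (rad_dy x y * (y - x) - 2 * W * skew_dy x y * (y - x) - 6 * W * (W - skew x y))
       / (2 * W * (y - x)^4)"
    using W d by (simp add: field_simps) (simp add: algebra_simps power_def)?
  moreover have "rad_dy x y * (y - x) - 2 * W * skew_dy x y * (y - x) - 6 * W * (W - skew x y)
     = lam_dy_rat x y + lam_dy_irr x y * W"
    unfolding lam_dy_rat_def lam_dy_irr_def W(2)[symmetric] by (simp add: algebra_simps)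
  ultimately show ?thesis by (simp add: W_def)
qed

lemma add_mult_sqrt_neg:
  fixes A B R :: real
  assumes "A < 0" "B^2 * R < A^2" "0 \<le> R"
  shows "A + B * sqrt R < 0"
proof -
  have "(B * sqrt R)^2 < A^2"
    using assms by (simp add: power_mult_distrib)
  then have "\<bar>B * sqrt R\<bar> < \<bar>A\<bar>"
    by (meson abs_le_square_iff not_le)
  then show ?thesis using assms by linarith
qed

lemma lam_of_deriv_snd_neg:
  assumes "0 < rad x y" "x \<noteq> y"
    and "lam_dy_rat x y < 0" "(lam_dy_irr x y)^2 * rad x y < (lam_dy_rat x y)^2"
  shows "\<exists>D. ((\<lambda>y. lam_of x y) has_real_derivative D) (at y) \<and> D < 0"
proof (intro exI conjI)
  show "((\<lambda>y. lam_of x y) has_real_derivative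
           (lam_dy_rat x y + lam_dy_irr x y * sqrt (rad x y)) / (2 * sqrt (rad x y) * (y - x)^4)) (at y)"
    using assms(1,2) by (rule lam_of_has_derivative_snd)
  have "lam_dy_rat x y + lam_dy_irr x y * sqrt (rad x y) < 0"
    using assms by (intro add_mult_sqrt_neg) auto
  moreover have "0 < 2 * sqrt (rad x y) * (y - x)^4"
    using assms by simp
  ultimately show "(lam_dy_rat x y + lam_dy_irr x y * sqrt (rad x y)) / (2 * sqrt (rad x y) * (y - x)^4) < 0"
    by (rule divide_neg_pos)
qed

lemma lam_dy_sign_conditions:
  assumes "-1 < x" "x < y" "y < 1"
  shows "lam_dy_rat x y < 0" "(lam_dy_irr x y)^2 * rad x y < (lam_dy_rat x y)^2"
proof -
  have "0 < lam_dy_cert_A (1 - y) (y - x) (1 + x)" "0 < lam_dy_cert_B (1 - y) (y - x) (1 + x)"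
    using assms by (auto intro!: lam_dy_cert_A_pos lam_dy_cert_B_pos)
  then show "lam_dy_rat x y < 0" "(lam_dy_irr x y)^2 * rad x y < (lam_dy_rat x y)^2"
    using lam_dy_cert_A_id[of x y] lam_dy_cert_B_id[of x y] by simp_all
qed

lemma lam_dx_sign_conditions:
  assumes "-1 < x" "x < y" "y < 1"
  shows "lam_dy_rat y x < 0" "(lam_dy_irr y x)^2 * rad y x < (lam_dy_rat y x)^2"
proof -
  have "0 < lam_dx_cert_A (1 - y) (y - x) (1 + x)" "0 < lam_dx_cert_B (1 - y) (y - x) (1 + x)"
    using assms by (auto intro!: lam_dx_cert_A_pos lam_dx_cert_B_pos)
  then show "lam_dy_rat y x < 0" "(lam_dy_irr y x)^2 * rad y x < (lam_dy_rat y x)^2"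
    using lam_dx_cert_A_id[where x = x and y = y] lam_dx_cert_B_id[where x = x and y = y] by (simp_all add: rad_swap)
qed

lemma lam_of_strict_antimono_snd:
  assumes "-1 < x" "x < y1" "y1 < y2" "y2 \<le> 1"
  shows "lam_of x y2 < lam_of x y1"
proof (rule DERIV_neg_imp_decreasing_open[OF \<open>y1 < y2\<close>])
  fix y assume "y1 < y" "y < y2"
  with assms have "-1 < x" "x < y" "y < 1" by auto
  then show "\<exists>D. ((\<lambda>y. lam_of x y) has_real_derivative D) (at y) \<and> D < 0"
    using lam_dy_sign_conditions rad_pos by (intro lam_of_deriv_snd_neg) auto
next
  show "continuous_on {y1..y2} (\<lambda>y. lam_of x y)"
    using assms by (intro continuous_at_imp_continuous_on ballI isCont_lam_of_snd) auto
qed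

lemma lam_of_strict_mono_fst:
  assumes "-1 \<le> x1" "x1 < x2" "x2 < y" "y < 1"
  shows "lam_of x1 y < lam_of x2 y"
proof -
  \<comment> \<open>By \<open>lam_of_swap\<close>, the \<open>x\<close>-derivative is a \<open>y\<close>-derivative at the swapped point.\<close>
  have "lam_of y x2 < lam_of y x1"
  proof (rule DERIV_neg_imp_decreasing_open[OF \<open>x1 < x2\<close>])
    fix x assume "x1 < x" "x < x2"
    with assms have "-1 < x" "x < y" "y < 1" by auto
    then show "\<exists>D. ((\<lambda>x. lam_of y x) has_real_derivative D) (at x) \<and> D < 0"
      using lam_dx_sign_conditions rad_pos rad_swap by (intro lam_of_deriv_snd_neg) auto
  next
    show "continuous_on {x1..x2} (\<lambda>x. lam_of y x)"
      using assms by (intro continuous_at_imp_continuous_on ballI isCont_lam_of_snd) auto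
  qed
  then show ?thesis by (simp add: lam_of_swap[of y])
qed

lemma mu_of_strict_antimono_snd:
  assumes "-1 < x" "x < y1" "y1 < y2" "y2 \<le> 1"
  shows "mu_of x y2 < mu_of x y1"
  unfolding mu_of_eq_lam_of_reflect using assms by (intro lam_of_strict_mono_fst) auto

lemma skew_ratio_has_derivative_snd:
  assumes "0 < rad x y"
  shows "((\<lambda>y. skew_ratio x y) has_real_derivative
           skew_ratio_dy_numer x y / (2 * rad x y * sqrt (rad x y))) (at y)"
proof -
  define W where "W = sqrt (rad x y)"
  have W: "0 < W" "W * W = rad x y"
    using assms by (simp_all add: W_def)
  have "((\<lambda>y. sqrt (rad x y)) has_real_derivative inverse (sqrt (rad x y)) / 2 * rad_dy x y) (at y)"
    by (rule DERIV_chain2[OF DERIV_real_sqrt[OF assms] rad_has_derivative_snd])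
  then have dW: "((\<lambda>y. sqrt (rad x y)) has_real_derivative rad_dy x y / (2 * W)) (at y)"
    by (rule DERIV_cong) (simp add: W_def field_simps)
  have "((\<lambda>y. skew_ratio x y) has_real_derivative
     (skew_dy x y * sqrt (rad x y) - skew x y * (rad_dy x y / (2 * W))) / (sqrt (rad x y) * sqrt (rad x y))) (at y)"
    unfolding skew_ratio_def using W by (intro DERIV_divide dW skew_has_derivative_snd) (simp add: W_def)
  moreover have "(skew_dy x y * W - skew x y * (rad_dy x y / (2 * W))) / (W * W)
     = skew_ratio_dy_numer x y / (2 * rad x y * W)"
    unfolding skew_ratio_dy_numer_def W(2)[symmetric] using W by (simp add: field_simps)
  ultimately show ?thesis by (simp add: W_def)
qed

lemma skew_ratio_strict_mono_fst:
  assumes "-1 < x1" "x1 < x2" "x2 < y" "y < 1"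
  shows "skew_ratio x1 y < skew_ratio x2 y"
proof -
  have deriv: "((\<lambda>x. skew_ratio y x) has_real_derivative
                 skew_ratio_dy_numer y x / (2 * rad y x * sqrt (rad y x))) (at x)"
    if "-1 < x" "x < y" for x
    using that assms rad_pos[of x y] by (intro skew_ratio_has_derivative_snd) (simp add: rad_swap)
  have "skew_ratio y x1 < skew_ratio y x2"
  proof (rule DERIV_pos_imp_increasing_open[OF \<open>x1 < x2\<close>])
    fix x assume x: "x1 < x" "x < x2"
    have "0 < skew_ratio_cert (1 - y) (y - x) (1 + x)"
      using x assms by (intro skew_ratio_cert_pos) auto
    then have "0 < skew_ratio_dy_numer y x"
      using skew_ratio_cert_id[where x = x and y = y] by simp
    moreover have "0 < rad y x" using x assms rad_pos[of x y] by (simp add: rad_swap)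
    ultimately show "\<exists>D. ((\<lambda>x. skew_ratio y x) has_real_derivative D) (at x) \<and> 0 < D"
      using deriv[of x] x assms by (intro exI[of _ "skew_ratio_dy_numer y x / (2 * rad y x * sqrt (rad y x))"]) auto
  next
    show "continuous_on {x1..x2} (\<lambda>x. skew_ratio y x)"
      using assms by (intro continuous_at_imp_continuous_on ballI DERIV_isCont[OF deriv]) auto
  qed
  then show ?thesis by (simp add: skew_ratio_swap)
qed

lemma skew_ratio_strict_mono_snd:
  assumes "-1 < x" "x < y1" "y1 < y2" "y2 < 1"
  shows "skew_ratio x y1 < skew_ratio x y2"
proof -
  have "skew_ratio (-y2) (-x) < skew_ratio (-y1) (-x)"
    using assms by (intro skew_ratio_strict_mono_fst) auto
  then show ?thesis by (simp add: skew_ratio_reflect)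
qed

lemma skew_ratio_eq_lam_of_mu_of:
  assumes "-1 \<le> x" "x < y" "y \<le> 1"
  shows "skew_ratio x y = (mu_of x y - lam_of x y) / (mu_of x y + lam_of x y)"
proof -
  have "0 < sqrt (rad x y)" "(y - x)^3 \<noteq> 0"
    using rad_pos[OF assms] assms by auto
  then show ?thesis
    unfolding skew_ratio_def mu_of_def lam_of_def by (simp add: field_simps)
qed

lemma lam_of_skew_ratio_distinct:
  assumes "-1 < x1" "x1 < y1" "y1 < 1" "x2 < y2" "y2 < 1" "x1 < x2"
  shows "lam_of x1 y1 \<noteq> lam_of x2 y2 \<or> skew_ratio x1 y1 \<noteq> skew_ratio x2 y2"
proof (cases "y2 \<le> y1")
  case True
  have "lam_of x1 y1 < lam_of x2 y1"
    using assms True by (intro lam_of_strict_mono_fst) auto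
  also have "\<dots> \<le> lam_of x2 y2"
    using lam_of_strict_antimono_snd[of x2 y2 y1] True assms by (cases "y2 = y1") auto
  finally show ?thesis by simp
next
  case False
  have "skew_ratio x1 y1 < skew_ratio x1 y2"
    using assms False by (intro skew_ratio_strict_mono_snd) auto
  also have "\<dots> < skew_ratio x2 y2"
    using assms by (intro skew_ratio_strict_mono_fst) auto
  finally show ?thesis by simp
qed

lemma lam_of_mu_of_inj:
  assumes "-1 < x1" "x1 < y1" "y1 < 1" "-1 < x2" "x2 < y2" "y2 < 1"
    and lam: "lam_of x1 y1 = lam_of x2 y2" and mu: "mu_of x1 y1 = mu_of x2 y2"
  shows "x1 = x2" "y1 = y2"
proof -
  have "skew_ratio x1 y1 = skew_ratio x2 y2"
    using assms by (simp add: skew_ratio_eq_lam_of_mu_of)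
  then show "x1 = x2"
    using lam_of_skew_ratio_distinct[of x1 y1 x2 y2] lam_of_skew_ratio_distinct[of x2 y2 x1 y1] assms
    by (cases x1 x2 rule: linorder_cases) auto
  then show "y1 = y2"
    using lam_of_strict_antimono_snd[of x1 y1 y2] lam_of_strict_antimono_snd[of x1 y2 y1] assms
    by (cases y1 y2 rule: linorder_cases) auto
qed

section \<open>Existence of a solution\<close>

lemma lam_of_at_one:
  assumes "x < 1" shows "lam_of x 1 = 1"
proof -
  have "rad x 1 = ((3 + x)^2 * (1 - x))^2" unfolding rad_def by algebra
  then have "sqrt (rad x 1) = (3 + x)^2 * (1 - x)" using assms by simp
  moreover have "(3 + x)^2 * (1 - x) - skew x 1 = (1 - x)^3" unfolding skew_def by algebra
  ultimately show ?thesis unfolding lam_of_def using assms by simp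
qed

lemma lam_of_at_minus_one:
  assumes "-1 < y" shows "lam_of (-1) y = (y^2 - 14*y + 17) / (1 + y)^2"
proof -
  have "rad (-1) y = ((3 - y)^2 * (1 + y))^2" unfolding rad_def by algebra
  then have "sqrt (rad (-1) y) = (3 - y)^2 * (1 + y)" using assms by simp
  moreover have "(3 - y)^2 * (1 + y) - skew (-1) y = (1 + y) * (y^2 - 14*y + 17)"
    unfolding skew_def by algebra
  moreover have "(y - -1)^3 = (1 + y) * (1 + y)^2" by algebra
  ultimately show ?thesis unfolding lam_of_def using assms by simp
qed

lemma lam_of_minus_one_gt:
  assumes "1 < lam" shows "lam < lam_of (-1) (1/lam - 1)"
proof -
  define s where "s = 1/lam - 1"
  have s: "-1 < s" "s < 0" "1 + s = 1/lam" using assms by (auto simp: s_def)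
  have "lam < 17 * lam^2" using assms by (simp add: power2_eq_square)
  also have "\<dots> \<le> (s^2 - 14*s + 17) * lam^2"
    using s by (intro mult_right_mono) (auto simp: power2_eq_square intro: mult_nonpos_nonpos)
  also have "\<dots> = (s^2 - 14*s + 17) / (1 + s)^2"
    by (simp add: s(3) power_one_over)
  also have "\<dots> = lam_of (-1) s"
    using s by (simp add: lam_of_at_minus_one)
  finally show ?thesis by (simp add: s_def)
qed

lemma skew_less_sqrt_rad_diag:
  assumes "-1 < x" "x < 1" shows "skew x x < sqrt (rad x x)"
proof -
  have "rad x x - (skew x x)^2 = 108 * (1 - x^2)^4"
    unfolding rad_def skew_def by algebra
  moreover have "0 < 1 - x^2" using assms by (simp add: abs_square_less_1)
  ultimately have "(skew x x)^2 < rad x x" by (smt (verit) zero_less_power)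
  then show ?thesis
    using real_less_rsqrt by fastforce
qed

lemma lam_of_tendsto_at_right_diag:
  assumes "-1 < x" "x < 1"
  shows "filterlim (lam_of x) at_top (at_right x)"
proof -
  have "((\<lambda>y. sqrt (rad x y) - skew x y) \<longlongrightarrow> sqrt (rad x x) - skew x x) (at_right x)"
    unfolding rad_def skew_def by (intro tendsto_intros)
  moreover have "((\<lambda>y. (y - x)^3) \<longlongrightarrow> 0) (at_right x)"
    by (intro tendsto_eq_intros) auto
  moreover have "eventually (\<lambda>y. 0 < (y - x)^3) (at_right x)"
    by (simp add: eventually_at_right_less)
  ultimately show ?thesis
    unfolding lam_of_def using skew_less_sqrt_rad_diag[OF assms]
    by (intro LIM_at_top_divide) auto
qed

lemma lam_level_ex1:
  assumes "-1 < x" "x < 1" "1 < lam"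
  shows "\<exists>!y. x < y \<and> y < 1 \<and> lam_of x y = lam"
proof (rule ex_ex1I)
  have "eventually (\<lambda>y. lam < lam_of x y) (at_right x)"
    using lam_of_tendsto_at_right_diag[OF assms(1,2)] by (simp add: filterlim_at_top_dense)
  moreover have "eventually (\<lambda>y. y \<in> {x<..<1}) (at_right x)"
    using assms by (intro eventually_at_right_real)
  ultimately obtain y0 where y0: "x < y0" "y0 < 1" "lam < lam_of x y0"
    using eventually_happens'[OF trivial_limit_at_right_real eventually_conj] by fastforce
  have "continuous_on {y0..1} (lam_of x)"
    using y0 by (intro continuous_at_imp_continuous_on ballI isCont_lam_of_snd) auto
  then obtain y where y: "y0 \<le> y" "y \<le> 1" "lam_of x y = lam"
    using IVT2'[of "lam_of x" 1 lam y0] y0 assms lam_of_at_one by fastforce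
  then show "\<exists>y. x < y \<and> y < 1 \<and> lam_of x y = lam"
    using y0 assms lam_of_at_one[of x] by (intro exI[of _ y]) (auto simp: order.order_iff_strict)
next
  fix y1 y2 assume "x < y1 \<and> y1 < 1 \<and> lam_of x y1 = lam" "x < y2 \<and> y2 < 1 \<and> lam_of x y2 = lam"
  then show "y1 = y2"
    using lam_of_strict_antimono_snd[of x y1 y2] lam_of_strict_antimono_snd[of x y2 y1] assms
    by (cases y1 y2 rule: linorder_cases) auto
qed

definition lam_level :: "real \<Rightarrow> real \<Rightarrow> real" where
  "lam_level lam x = (THE y. x < y \<and> y < 1 \<and> lam_of x y = lam)"

lemma lam_level:
  assumes "-1 < x" "x < 1" "1 < lam"
  shows "x < lam_level lam x" "lam_level lam x < 1" "lam_of x (lam_level lam x) = lam"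
  using theI'[OF lam_level_ex1[OF assms]] unfolding lam_level_def by auto

lemma less_lam_level_iff:
  assumes "-1 < x" "x < y" "y \<le> 1" "1 < lam"
  shows "y < lam_level lam x \<longleftrightarrow> lam < lam_of x y"
  using lam_level[of x lam] lam_of_strict_antimono_snd[of x y "lam_level lam x"]
    lam_of_strict_antimono_snd[of x "lam_level lam x" y] assms
  by (cases y "lam_level lam x" rule: linorder_cases) auto

lemma lam_level_less_iff:
  assumes "-1 < x" "x < y" "y \<le> 1" "1 < lam"
  shows "lam_level lam x < y \<longleftrightarrow> lam_of x y < lam"
  using lam_level[of x lam] lam_of_strict_antimono_snd[of x y "lam_level lam x"]
    lam_of_strict_antimono_snd[of x "lam_level lam x" y] assms
  by (cases y "lam_level lam x" rule: linorder_cases) auto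

lemma eventually_less_lam_level:
  assumes "-1 < x0" "x0 < 1" "1 < lam" "a < lam_level lam x0"
  shows "eventually (\<lambda>x. a < lam_level lam x) (at x0)"
proof -
  define y where "y = max a ((x0 + lam_level lam x0) / 2)"
  have y: "x0 < y" "y < lam_level lam x0"
    using assms(4) lam_level[OF assms(1-3)] by (auto simp: y_def less_max_iff_disj)
  then have "lam < lam_of x0 y"
    using assms lam_level[OF assms(1-3)] by (subst less_lam_level_iff[symmetric]) auto
  then have "eventually (\<lambda>x. lam < lam_of x y) (at x0)"
    using y by (intro order_tendstoD[OF isCont_lam_of_fst[unfolded isCont_def]]) auto
  moreover have "eventually (\<lambda>x. -1 < x \<and> x < y) (at x0)"
    using assms y by (intro eventually_conj order_tendstoD[OF tendsto_ident_at]) auto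
  ultimately show ?thesis
  proof eventually_elim
    case (elim x)
    then have "y < lam_level lam x"
      using assms y lam_level[OF assms(1-3)] by (subst less_lam_level_iff) auto
    then show ?case by (simp add: y_def)
  qed
qed

lemma eventually_lam_level_less:
  assumes "-1 < x0" "x0 < 1" "1 < lam" "lam_level lam x0 < a"
  shows "eventually (\<lambda>x. lam_level lam x < a) (at x0)"
proof (cases "a \<le> 1")
  case True
  have "x0 < a" using assms lam_level[OF assms(1-3)] by simp
  have "lam_of x0 a < lam"
    using assms True \<open>x0 < a\<close> by (subst lam_level_less_iff[symmetric]) auto
  then have "eventually (\<lambda>x. lam_of x a < lam) (at x0)"
    using \<open>x0 < a\<close> by (intro order_tendstoD[OF isCont_lam_of_fst[unfolded isCont_def]]) auto
  moreover have "eventually (\<lambda>x. -1 < x \<and> x < a) (at x0)"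
    using assms \<open>x0 < a\<close> by (intro eventually_conj order_tendstoD[OF tendsto_ident_at]) auto
  ultimately show ?thesis
    by eventually_elim (use assms True in \<open>simp add: lam_level_less_iff\<close>)
next
  case False
  have "eventually (\<lambda>x. -1 < x \<and> x < 1) (at x0)"
    using assms by (intro eventually_conj order_tendstoD[OF tendsto_ident_at]) auto
  then show ?thesis
    by eventually_elim (use assms False lam_level in fastforce)
qed

lemma isCont_lam_level:
  assumes "-1 < x0" "x0 < 1" "1 < lam"
  shows "isCont (lam_level lam) x0"
  unfolding isCont_def
  using eventually_less_lam_level[OF assms] eventually_lam_level_less[OF assms]
  by (rule order_tendstoI)

lemma mu_of_lam_level_less_near_minus_one:
  assumes "1 < lam" "1 < mu"
  obtains x where "-1 < x" "x < 0" "mu_of x (lam_level lam x) < mu"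
proof -
  define s where "s = 1/lam - 1"
  have s: "-1 < s" "s < 0" using assms by (auto simp: s_def)
  have "mu_of (-1) s = 1"
    using s by (simp add: mu_of_eq_lam_of_reflect lam_of_at_one)
  then have "eventually (\<lambda>x. lam < lam_of x s \<and> mu_of x s < mu) (at (-1))"
    using s lam_of_minus_one_gt[OF assms(1)] assms(2) unfolding s_def
    by (intro eventually_conj order_tendstoD[OF isCont_lam_of_fst[unfolded isCont_def]]
        order_tendstoD[OF isCont_mu_of_fst[unfolded isCont_def]]) auto
  then have "eventually (\<lambda>x. lam < lam_of x s \<and> mu_of x s < mu) (at_right (-1))"
    by (rule filter_leD[OF at_le, rotated]) simp
  moreover have "eventually (\<lambda>x. x \<in> {-1<..<s}) (at_right (-1))"
    using s by (intro eventually_at_right_real)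
  ultimately obtain x where x: "-1 < x" "x < s" "lam < lam_of x s" "mu_of x s < mu"
    using eventually_happens'[OF trivial_limit_at_right_real eventually_conj] by fastforce
  then have "s < lam_level lam x"
    using s assms by (simp add: less_lam_level_iff)
  then have "mu_of x (lam_level lam x) < mu_of x s"
    using x s lam_level[of x lam] assms by (intro mu_of_strict_antimono_snd) auto
  with x s show thesis
    by (intro that[of x]) auto
qed

lemma mu_of_lam_level_greater:
  assumes "1 < lam" "1 < mu"
  shows "mu < mu_of (1 - 1/mu) (lam_level lam (1 - 1/mu))"
proof -
  define x where "x = 1 - 1/mu"
  have x: "0 < x" "x < 1" using assms by (auto simp: x_def)
  have "mu < mu_of x 1"
    using lam_of_minus_one_gt[OF assms(2)] by (simp add: mu_of_eq_lam_of_reflect x_def)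
  also have "\<dots> < mu_of x (lam_level lam x)"
    using x lam_level[of x lam] assms by (intro mu_of_strict_antimono_snd) auto
  finally show ?thesis by (simp add: x_def)
qed

lemma isCont_mu_of_lam_level:
  assumes "-1 < x" "x < 1" "1 < lam"
  shows "isCont (\<lambda>x. mu_of x (lam_level lam x)) x"
  using isCont_lam_level[OF assms] lam_level[OF assms]
  unfolding mu_of_def rad_def skew_def by (intro continuous_intros) auto

lemma lam_of_mu_of_surj:
  assumes "1 < lam" "1 < mu"
  obtains x y where "-1 < x" "x < y" "y < 1" "lam_of x y = lam" "mu_of x y = mu"
proof -
  obtain x1 where x1: "-1 < x1" "x1 < 0" "mu_of x1 (lam_level lam x1) < mu"
    using mu_of_lam_level_less_near_minus_one[OF assms] .
  define x2 where "x2 = 1 - 1/mu"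
  have x2: "0 < x2" "x2 < 1" "mu < mu_of x2 (lam_level lam x2)"
    using assms mu_of_lam_level_greater[OF assms] by (auto simp: x2_def)
  have "continuous_on {x1..x2} (\<lambda>x. mu_of x (lam_level lam x))"
    using x1 x2 assms by (intro continuous_at_imp_continuous_on ballI isCont_mu_of_lam_level) auto
  then obtain x where "x1 \<le> x" "x \<le> x2" "mu_of x (lam_level lam x) = mu"
    using IVT'[of "\<lambda>x. mu_of x (lam_level lam x)" x1 mu x2] x1 x2 by auto
  with x1 x2 lam_level[of x lam] assms show thesis
    by (intro that[of x "lam_level lam x"]) auto
qed

section \<open>The quadratic determining \<open>\<beta>\<close> and \<open>b\<close>\<close>

lemma monic_quadratic_root_between:
  fixes s q t :: real
  assumes "t^2 + s*t + q < 0"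
  obtains r1 r2 where "r1 < t" "t < r2" "r1^2 + s*r1 + q = 0" "r2^2 + s*r2 + q = 0"
proof -
  define D where "D = s^2 - 4*q"
  have "(2*t + s)^2 < D"
    using assms by (simp add: D_def power2_eq_square algebra_simps)
  then have D: "0 \<le> D" "\<bar>2*t + s\<bar> < sqrt D"
    by (auto intro: order.trans[OF zero_le_power2 less_imp_le] real_less_rsqrt)
  show thesis
  proof (rule that[of "(- s - sqrt D) / 2" "(- s + sqrt D) / 2"])
    show "(- s - sqrt D) / 2 < t" "t < (- s + sqrt D) / 2"
      using D(2) by (auto simp: abs_less_iff)
    show "((- s - sqrt D) / 2)^2 + s * ((- s - sqrt D) / 2) + q = 0"
      "((- s + sqrt D) / 2)^2 + s * ((- s + sqrt D) / 2) + q = 0"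
      using D(1) by (simp_all add: D_def power2_eq_square field_simps)
  qed
qed

lemma quad_at_one_neg:
  assumes "-1 < \<alpha>" "\<alpha> < a" "a < 1"
  shows "quad \<alpha> a 1 < 0" "quad \<alpha> a (-1) < 0"
proof -
  have p: "0 < 1 - a*\<alpha>" using one_minus_mult_pos[of \<alpha> a] assms by (simp add: mult.commute)
  have "(1 - a*\<alpha>) * quad \<alpha> a 1 = - ((1 - \<alpha>) * (1 - a) * (2 + a + \<alpha>))"
       "(1 - a*\<alpha>) * quad \<alpha> a (-1) = - ((1 + \<alpha>) * (1 + a) * (2 - a - \<alpha>))"
    unfolding quad_def using p by (simp_all add: field_simps) algebra+
  moreover have "0 < (1 - \<alpha>) * (1 - a) * (2 + a + \<alpha>)" "0 < (1 + \<alpha>) * (1 + a) * (2 - a - \<alpha>)"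
    using assms by (intro mult_pos_pos; simp)+
  ultimately have "(1 - a*\<alpha>) * quad \<alpha> a 1 < 0" "(1 - a*\<alpha>) * quad \<alpha> a (-1) < 0"
    by linarith+
  then show "quad \<alpha> a 1 < 0" "quad \<alpha> a (-1) < 0"
    using p by (simp_all add: mult_less_0_iff)
qed

lemma quad_roots_outside:
  assumes "-1 < \<alpha>" "\<alpha> < a" "a < 1"
  obtains \<beta> b where "\<beta> < -1" "1 < b" "quad \<alpha> a \<beta> = 0" "quad \<alpha> a b = 0"
proof -
  have quad: "quad \<alpha> a x = x^2 + (a + \<alpha>) * x + ((a - \<alpha>)^2 / (1 - a*\<alpha>) - 3)" for x
    by (simp add: quad_def)
  obtain \<beta> where "\<beta> < -1" "quad \<alpha> a \<beta> = 0"
    using quad_at_one_neg(2)[OF assms] monic_quadratic_root_between unfolding quad by metis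
  moreover obtain b where "1 < b" "quad \<alpha> a b = 0"
    using quad_at_one_neg(1)[OF assms] monic_quadratic_root_between unfolding quad by metis
  ultimately show thesis using that by blast
qed

lemma quad_roots_sum:
  assumes "quad \<alpha> a r1 = 0" "quad \<alpha> a r2 = 0" "r1 \<noteq> r2"
  shows "r1 + r2 = - (a + \<alpha>)"
proof -
  have "(r1 - r2) * (r1 + r2 + (a + \<alpha>)) = 0"
    using assms unfolding quad_def by algebra
  then show ?thesis using assms(3) by simp
qed

lemma quad_root_unique_outside:
  assumes "-1 < \<alpha>" "\<alpha> < a" "a < 1" "quad \<alpha> a r1 = 0" "quad \<alpha> a r2 = 0"
    and "(r1 < -1 \<and> r2 < -1) \<or> (1 < r1 \<and> 1 < r2)"
  shows "r1 = r2"
  using quad_roots_sum[of \<alpha> a r1 r2] assms by (cases "r1 = r2") auto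

lemma quad_eq_0_iff:
  assumes "1 - \<alpha>*a \<noteq> 0"
  shows "quad \<alpha> a x = 0 \<longleftrightarrow> (1 - \<alpha>*a) * (x^2 + (a + \<alpha>)*x - 3) + (a - \<alpha>)^2 = 0"
proof -
  have "(1 - \<alpha>*a) * quad \<alpha> a x = (1 - \<alpha>*a) * (x^2 + (a + \<alpha>)*x - 3) + (a - \<alpha>)^2"
    using assms unfolding quad_def by (simp add: field_simps mult.commute)
  then show ?thesis using assms by (metis mult_eq_0_iff)
qed

lemma quad_reflect: "quad \<alpha> a (- (a + \<alpha>) - x) = quad \<alpha> a x"
  unfolding quad_def by (simp add: algebra_simps power2_eq_square)

section \<open>Partial fractions of \<open>P/Q\<close>\<close>

lemma is_real_pole_imp_poly_eq_0:
  assumes "is_real_pole (ratfun P Q) x" shows "poly Q x = 0"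
proof (rule ccontr)
  assume "poly Q x \<noteq> 0"
  then have "((\<lambda>z. \<bar>ratfun P Q z\<bar>) \<longlongrightarrow> \<bar>ratfun P Q x\<bar>) (at x)"
    unfolding ratfun_def by (intro tendsto_intros) auto
  moreover have "filterlim (\<lambda>z. \<bar>ratfun P Q z\<bar>) at_infinity (at x)"
    using assms unfolding is_real_pole_def by (rule filterlim_at_top_imp_at_infinity)
  ultimately show False
    using not_tendsto_and_filterlim_at_infinity[of "at x"] by auto
qed

lemma poly_degree_3:
  fixes P :: "'a::comm_semiring_1 poly"
  assumes "degree P = 3"
  shows "poly P z = coeff P 0 + coeff P 1 * z + coeff P 2 * z^2 + coeff P 3 * z^3"
  unfolding poly_altdef assms by (simp add: eval_nat_numeral algebra_simps)

lemma poly_degree_2: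
  fixes Q :: "'a::comm_semiring_1 poly"
  assumes "degree Q = 2"
  shows "poly Q z = coeff Q 0 + coeff Q 1 * z + coeff Q 2 * z^2"
  unfolding poly_altdef assms by (simp add: eval_nat_numeral algebra_simps)

lemma ratfun_cubic_over_poles_pm1:
  assumes "degree P = 3" "degree Q = 2"
    and "is_real_pole (ratfun P Q) (-1)" "is_real_pole (ratfun P Q) 1"
  shows "ratfun P Q = (\<lambda>z. (coeff P 0 + coeff P 1 * z + coeff P 2 * z^2 + coeff P 3 * z^3)
                              / (coeff Q 2 * (z^2 - 1)))"
    "coeff P 3 \<noteq> 0" "coeff Q 2 \<noteq> 0"
proof -
  have "poly Q 1 = 0" "poly Q (-1) = 0"
    using assms(3,4) by (simp_all add: is_real_pole_imp_poly_eq_0)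
  then have "coeff Q 1 = 0" "coeff Q 0 = - coeff Q 2"
    using poly_degree_2[OF assms(2)] by (simp_all add: algebra_simps)
  then have "poly Q z = coeff Q 2 * (z^2 - 1)" for z
    by (simp add: poly_degree_2[OF assms(2)] algebra_simps)
  then show "ratfun P Q = (\<lambda>z. (coeff P 0 + coeff P 1 * z + coeff P 2 * z^2 + coeff P 3 * z^3)
                              / (coeff Q 2 * (z^2 - 1)))"
    unfolding ratfun_def poly_degree_3[OF assms(1)] by simp
  show "coeff P 3 \<noteq> 0" "coeff Q 2 \<noteq> 0"
    using assms(1,2) leading_coeff_neq_0[of P] leading_coeff_neq_0[of Q] by force+
qed

lemma critical_point_quartic:
  fixes p0 p1 p2 p3 q2 r :: real
  assumes "q2 \<noteq> 0" "r^2 \<noteq> 1"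
    and "((\<lambda>z. (p0 + p1*z + p2*z^2 + p3*z^3) / (q2*(z^2 - 1))) has_real_derivative 0) (at r)"
  shows "p3*r^4 - (p1 + 3*p3)*r^2 - 2*(p0 + p2)*r - p1 = 0"
proof -
  have "((\<lambda>z. (p0 + p1*z + p2*z^2 + p3*z^3) / (q2*(z^2 - 1))) has_real_derivative
     ((p1 + 2*p2*r + 3*p3*r^2) * (q2*(r^2 - 1)) - (p0 + p1*r + p2*r^2 + p3*r^3) * (q2*(2*r)))
       / ((q2*(r^2 - 1)) * (q2*(r^2 - 1)))) (at r)"
    using assms(1,2) by (intro DERIV_divide) (rule derivative_eq_intros refl | simp)+
  from DERIV_unique[OF this assms(3)] assms(1,2)
  have "(p1 + 2*p2*r + 3*p3*r^2) * (q2*(r^2 - 1)) - (p0 + p1*r + p2*r^2 + p3*r^3) * (q2*(2*r)) = 0"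
    by simp
  moreover have "(p1 + 2*p2*r + 3*p3*r^2) * (q2*(r^2 - 1)) - (p0 + p1*r + p2*r^2 + p3*r^3) * (q2*(2*r))
     = q2 * (p3*r^4 - (p1 + 3*p3)*r^2 - 2*(p0 + p2)*r - p1)"
    by algebra
  ultimately show ?thesis using assms(1) by simp
qed

lemma quartic_vieta:
  fixes r1 r2 r3 r4 c0 c1 c2 c3 :: "'a::idom"
  assumes "distinct [r1, r2, r3, r4]"
    and roots: "\<And>r. r \<in> {r1, r2, r3, r4} \<Longrightarrow> r^4 + c3*r^3 + c2*r^2 + c1*r + c0 = 0"
  shows "c3 = - (r1 + r2 + r3 + r4)"
    "c2 = r1*r2 + r1*r3 + r1*r4 + r2*r3 + r2*r4 + r3*r4"
    "c1 = - (r1*r2*r3 + r1*r2*r4 + r1*r3*r4 + r2*r3*r4)"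
    "c0 = r1*r2*r3*r4"
proof -
  define d1 where "d1 x y = x^3 + x^2*y + x*y^2 + y^3 + c3*(x^2 + x*y + y^2) + c2*(x + y) + c1" for x y
  define d2 where "d2 x y z = x^2 + y^2 + z^2 + x*y + x*z + y*z + c3*(x + y + z) + c2" for x y z
  have d1: "d1 r1 r = 0" if "r \<in> {r2, r3, r4}" for r
  proof -
    have "(r1 - r) * d1 r1 r = 0"
      using roots[of r1] roots[of r] that unfolding d1_def by auto algebra+
    then show ?thesis using assms(1) that by auto
  qed
  have d2: "d2 r1 r2 r = 0" if "r \<in> {r3, r4}" for r
  proof -
    have "(r2 - r) * d2 r1 r2 r = 0"
      using d1[of r2] d1[of r] that unfolding d1_def d2_def by auto algebra+
    then show ?thesis using assms(1) that by auto
  qed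
  have "(r3 - r4) * (r1 + r2 + r3 + r4 + c3) = 0"
    using d2[of r3] d2[of r4] unfolding d2_def by simp algebra
  moreover have "r3 - r4 \<noteq> 0" using assms(1) by simp
  ultimately have "r1 + r2 + r3 + r4 + c3 = 0" by simp
  then show c3: "c3 = - (r1 + r2 + r3 + r4)" by algebra
  show c2: "c2 = r1*r2 + r1*r3 + r1*r4 + r2*r3 + r2*r4 + r3*r4"
    using d2[of r3] c3 unfolding d2_def by simp algebra
  show c1: "c1 = - (r1*r2*r3 + r1*r2*r4 + r1*r3*r4 + r2*r3*r4)"
    using d1[of r2] c3 c2 unfolding d1_def by simp algebra
  show "c0 = r1*r2*r3*r4"
    using roots[of r1] c3 c2 c1 by simp algebra
qed

lemma cubic_over_z2_minus_1_partial_fractions: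
  fixes p0 p1 p2 p3 q2 A B z :: real
  assumes "p3 \<noteq> 0" "q2 \<noteq> 0" "z \<noteq> 1" "z \<noteq> -1"
    and p1: "p1 = - p3 * (1 + A + B)" and p0: "p0 = - p2 - p3 * (A - B)"
  shows "(p0 + p1*z + p2*z^2 + p3*z^3) / (q2*(z^2 - 1)) = p3/q2 * (p2/p3 + z + A/(1 - z) - B/(1 + z))"
proof -
  have nz: "1 - z \<noteq> 0" "1 + z \<noteq> 0" "z^2 - 1 \<noteq> 0"
    using assms(3,4) by (auto simp: power2_eq_1_iff)
  have "p0 + p1*z + p2*z^2 + p3*z^3 = (p2 + p3*z) * (z^2 - 1) - p3*A*(1 + z) - p3*B*(z - 1)"
    unfolding p1 p0 by algebra
  also have "\<dots> = p3 * (p2/p3 + z + A/(1 - z) - B/(1 + z)) * (z^2 - 1)"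
    using nz assms(1) by (simp add: field_simps power2_eq_square)
  finally show ?thesis
    using nz assms(2) by simp
qed

lemma critical_points_vieta:
  fixes p0 p1 p2 p3 \<beta> \<alpha> a b :: real
  assumes p3: "p3 \<noteq> 0" and dist: "distinct [\<beta>, \<alpha>, a, b]"
    and crit: "\<forall>r \<in> {\<beta>, \<alpha>, a, b}. p3*r^4 - (p1 + 3*p3)*r^2 - 2*(p0 + p2)*r - p1 = 0"
  shows "\<beta> + \<alpha> + a + b = 0"
    and "(1 - \<alpha>*a) * (b^2 + (a + \<alpha>)*b - 3) + (a - \<alpha>)^2 = 0"
    and "p1 = - p3 * (1 + coefA \<beta> \<alpha> a b + coefB \<beta> \<alpha> a b)"
    and "p0 = - p2 - p3 * (coefA \<beta> \<alpha> a b - coefB \<beta> \<alpha> a b)"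
proof -
  have "r^4 + 0*r^3 + (- (p1 + 3*p3)/p3)*r^2 + (- 2*(p0 + p2)/p3)*r + (- p1/p3) = 0"
    if "r \<in> {\<beta>, \<alpha>, a, b}" for r
    using bspec[OF crit that] p3 by (simp add: field_simps)
  note vieta = quartic_vieta[OF dist this]
  show sum: "\<beta> + \<alpha> + a + b = 0"
    using vieta(1) by simp
  have e2: "p3*(\<beta>*\<alpha> + \<beta>*a + \<beta>*b + \<alpha>*a + \<alpha>*b + a*b) = - (p1 + 3*p3)"
    and e3: "p3*(\<beta>*\<alpha>*a + \<beta>*\<alpha>*b + \<beta>*a*b + \<alpha>*a*b) = 2*(p0 + p2)"
    and e4: "p3*(\<beta>*\<alpha>*a*b) = - p1"
    using vieta(2-4) p3 by (simp_all add: field_simps)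
  have \<beta>: "\<beta> = - (\<alpha> + a + b)" using sum by simp
  have "p3 * ((1 - \<alpha>*a) * (b^2 + (a + \<alpha>)*b - 3) + (a - \<alpha>)^2)
      = p3*(\<beta>*\<alpha>*a*b) - p3*(\<beta>*\<alpha> + \<beta>*a + \<beta>*b + \<alpha>*a + \<alpha>*b + a*b) - 3*p3"
    unfolding \<beta> by algebra
  also have "\<dots> = 0" unfolding e2 e4 by simp
  finally show "(1 - \<alpha>*a) * (b^2 + (a + \<alpha>)*b - 3) + (a - \<alpha>)^2 = 0"
    using p3 by simp
  have "p3 * (4 * coefA \<beta> \<alpha> a b) = p3 - p3*(\<beta> + \<alpha> + a + b)
       + p3*(\<beta>*\<alpha> + \<beta>*a + \<beta>*b + \<alpha>*a + \<alpha>*b + a*b)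
       - p3*(\<beta>*\<alpha>*a + \<beta>*\<alpha>*b + \<beta>*a*b + \<alpha>*a*b) + p3*(\<beta>*\<alpha>*a*b)"
    "p3 * (4 * coefB \<beta> \<alpha> a b) = p3 + p3*(\<beta> + \<alpha> + a + b)
       + p3*(\<beta>*\<alpha> + \<beta>*a + \<beta>*b + \<alpha>*a + \<alpha>*b + a*b)
       + p3*(\<beta>*\<alpha>*a + \<beta>*\<alpha>*b + \<beta>*a*b + \<alpha>*a*b) + p3*(\<beta>*\<alpha>*a*b)"
    unfolding coefA_def coefB_def by algebra+
  then show "p1 = - p3 * (1 + coefA \<beta> \<alpha> a b + coefB \<beta> \<alpha> a b)"
    "p0 = - p2 - p3 * (coefA \<beta> \<alpha> a b - coefB \<beta> \<alpha> a b)"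
    unfolding e2 e3 e4 sum by algebra+
qed

lemma isGtilde_partial_fractions:
  assumes "isGtilde lam mu P Q"
  obtains \<beta> \<alpha> a b c e where "\<beta> < -1" "-1 < \<alpha>" "\<alpha> < a" "a < 1" "1 < b"
    "\<beta> + \<alpha> + a + b = 0" "(1 - \<alpha>*a) * (b^2 + (a + \<alpha>)*b - 3) + (a - \<alpha>)^2 = 0"
    "\<And>z. z \<noteq> 1 \<Longrightarrow> z \<noteq> -1 \<Longrightarrow>
       ratfun P Q z = c * (e + z + coefA \<beta> \<alpha> a b / (1 - z) - coefB \<beta> \<alpha> a b / (1 + z))"
    "ratfun P Q \<beta> = - mu" "ratfun P Q \<alpha> = -1" "ratfun P Q a = 1" "ratfun P Q b = lam"
proof -
  from assms obtain \<beta> \<alpha> a b where deg: "degree P = 3" "degree Q = 2"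
    and poles: "is_real_pole (ratfun P Q) (-1)" "is_real_pole (ratfun P Q) 1"
    and ord: "\<beta> < -1" "-1 < \<alpha>" "\<alpha> < a" "a < 1" "1 < b"
    and crit: "\<And>r. r \<in> {\<beta>, \<alpha>, a, b} \<Longrightarrow> (ratfun P Q has_real_derivative 0) (at r)"
    and val: "ratfun P Q \<beta> = - mu" "ratfun P Q b = lam" "- ratfun P Q \<alpha> = 1" "ratfun P Q a = 1"
    unfolding isGtilde_def by blast
  note f = ratfun_cubic_over_poles_pm1[OF deg poles]
  have quartic: "\<forall>r \<in> {\<beta>, \<alpha>, a, b}.
    coeff P 3 * r^4 - (coeff P 1 + 3 * coeff P 3) * r^2 - 2 * (coeff P 0 + coeff P 2) * r - coeff P 1 = 0"
  proof (intro ballI critical_point_quartic[OF f(3)])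
    fix r assume r: "r \<in> {\<beta>, \<alpha>, a, b}"
    show "r^2 \<noteq> 1" using r ord by (auto simp: power2_eq_1_iff)
    show "((\<lambda>z. (coeff P 0 + coeff P 1 * z + coeff P 2 * z^2 + coeff P 3 * z^3) / (coeff Q 2 * (z^2 - 1)))
            has_real_derivative 0) (at r)"
      using crit[OF r] by (simp add: f(1))
  qed
  have "distinct [\<beta>, \<alpha>, a, b]" using ord by auto
  note pf = critical_points_vieta[OF f(2) this quartic]
  show thesis
  proof (rule that)
    show "ratfun P Q z = coeff P 3 / coeff Q 2 * (coeff P 2 / coeff P 3 + z
            + coefA \<beta> \<alpha> a b / (1 - z) - coefB \<beta> \<alpha> a b / (1 + z))" if "z \<noteq> 1" "z \<noteq> -1" for z
      unfolding f(1) using cubic_over_z2_minus_1_partial_fractions[OF f(2,3) that pf(3,4)] by simp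
  qed (use ord pf(1,2) val in auto)
qed

definition node_term :: "real \<Rightarrow> real \<Rightarrow> real \<Rightarrow> real \<Rightarrow> real" where
  "node_term r p q s = 4*r + (1 - p)*(1 - q)*(1 - s) - (1 + p)*(1 + q)*(1 + s)"

lemma partial_fraction_at_nodes:
  fixes \<beta> \<alpha> a b e :: real
  defines "F \<equiv> \<lambda>z. e + z + coefA \<beta> \<alpha> a b / (1 - z) - coefB \<beta> \<alpha> a b / (1 + z)"
  assumes "\<forall>r \<in> {\<beta>, \<alpha>, a, b}. r \<noteq> 1 \<and> r \<noteq> -1"
  shows "4 * F \<beta> = 4*e + node_term \<beta> \<alpha> a b" "4 * F \<alpha> = 4*e + node_term \<alpha> \<beta> a b"
    "4 * F a = 4*e + node_term a \<beta> \<alpha> b" "4 * F b = 4*e + node_term b \<beta> \<alpha> a"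
proof -
  have "1 - \<beta> \<noteq> 0" "1 + \<beta> \<noteq> 0" "1 - \<alpha> \<noteq> 0" "1 + \<alpha> \<noteq> 0"
    "1 - a \<noteq> 0" "1 + a \<noteq> 0" "1 - b \<noteq> 0" "1 + b \<noteq> 0"
    using assms(2) by auto
  then have "coefA \<beta> \<alpha> a b / (1 - \<beta>) = (1 - \<alpha>)*(1 - a)*(1 - b) / 4"
    "coefB \<beta> \<alpha> a b / (1 + \<beta>) = (1 + \<alpha>)*(1 + a)*(1 + b) / 4"
    "coefA \<beta> \<alpha> a b / (1 - \<alpha>) = (1 - \<beta>)*(1 - a)*(1 - b) / 4"
    "coefB \<beta> \<alpha> a b / (1 + \<alpha>) = (1 + \<beta>)*(1 + a)*(1 + b) / 4"
    "coefA \<beta> \<alpha> a b / (1 - a) = (1 - \<beta>)*(1 - \<alpha>)*(1 - b) / 4"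
    "coefB \<beta> \<alpha> a b / (1 + a) = (1 + \<beta>)*(1 + \<alpha>)*(1 + b) / 4"
    "coefA \<beta> \<alpha> a b / (1 - b) = (1 - \<beta>)*(1 - \<alpha>)*(1 - a) / 4"
    "coefB \<beta> \<alpha> a b / (1 + b) = (1 + \<beta>)*(1 + \<alpha>)*(1 + a) / 4"
    unfolding coefA_def coefB_def by (simp_all add: field_simps)
  then show "4 * F \<beta> = 4*e + node_term \<beta> \<alpha> a b" "4 * F \<alpha> = 4*e + node_term \<alpha> \<beta> a b"
    "4 * F a = 4*e + node_term a \<beta> \<alpha> b" "4 * F b = 4*e + node_term b \<beta> \<alpha> a"
    unfolding F_def node_term_def by (simp_all add: algebra_simps)
qed

lemma node_term_identities:
  fixes \<beta> \<alpha> a b :: real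
  assumes sum: "\<beta> + \<alpha> + a + b = 0"
    and con: "(1 - \<alpha>*a) * (b^2 + (a + \<alpha>)*b - 3) + (a - \<alpha>)^2 = 0"
  shows "(1 - a*\<alpha>) * (node_term a \<beta> \<alpha> b - node_term \<alpha> \<beta> a b) = 2 * (a - \<alpha>)^3"
    "(1 - a*\<alpha>) * (node_term b \<beta> \<alpha> a + node_term \<beta> \<alpha> a b - node_term a \<beta> \<alpha> b - node_term \<alpha> \<beta> a b)
       = - 2 * skew \<alpha> a"
    "node_term b \<beta> \<alpha> a - node_term \<beta> \<alpha> a b = 2 * (3 + a*\<alpha>) * (b - \<beta>)"
    "(1 - a*\<alpha>) * (b - \<beta>)^2 = (3 + a*\<alpha>) * (4 - (a + \<alpha>)^2)"
proof -
  have \<beta>: "\<beta> = - (\<alpha> + a + b)" using sum by simp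
  have "(1 - a*\<alpha>) * (node_term a \<beta> \<alpha> b - node_term \<alpha> \<beta> a b) - 2 * (a - \<alpha>)^3
      = 2 * (a - \<alpha>) * ((1 - \<alpha>*a) * (b^2 + (a + \<alpha>)*b - 3) + (a - \<alpha>)^2) * (-1)"
    unfolding node_term_def \<beta> by algebra
  then show "(1 - a*\<alpha>) * (node_term a \<beta> \<alpha> b - node_term \<alpha> \<beta> a b) = 2 * (a - \<alpha>)^3"
    unfolding con by simp
  have "(1 - a*\<alpha>) * (node_term b \<beta> \<alpha> a + node_term \<beta> \<alpha> a b - node_term a \<beta> \<alpha> b - node_term \<alpha> \<beta> a b)
      + 2 * skew \<alpha> a = - 2 * (a + \<alpha>) * ((1 - \<alpha>*a) * (b^2 + (a + \<alpha>)*b - 3) + (a - \<alpha>)^2)"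
    unfolding node_term_def skew_def \<beta> by algebra
  then show "(1 - a*\<alpha>) * (node_term b \<beta> \<alpha> a + node_term \<beta> \<alpha> a b - node_term a \<beta> \<alpha> b - node_term \<alpha> \<beta> a b)
       = - 2 * skew \<alpha> a"
    unfolding con by simp
  show "node_term b \<beta> \<alpha> a - node_term \<beta> \<alpha> a b = 2 * (3 + a*\<alpha>) * (b - \<beta>)"
    unfolding node_term_def \<beta> by algebra
  have "(1 - a*\<alpha>) * (b - \<beta>)^2 - (3 + a*\<alpha>) * (4 - (a + \<alpha>)^2)
      = 4 * ((1 - \<alpha>*a) * (b^2 + (a + \<alpha>)*b - 3) + (a - \<alpha>)^2)"
    unfolding \<beta> by algebra
  then show "(1 - a*\<alpha>) * (b - \<beta>)^2 = (3 + a*\<alpha>) * (4 - (a + \<alpha>)^2)"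
    unfolding con by simp
qed

lemma coefh_eq_node_terms:
  fixes \<beta> \<alpha> a b :: real
  assumes sum: "\<beta> + \<alpha> + a + b = 0"
    and con: "(1 - \<alpha>*a) * (b^2 + (a + \<alpha>)*b - 3) + (a - \<alpha>)^2 = 0"
    and "1 - \<alpha>*a \<noteq> 0"
  shows "8 * (coefh \<alpha> a - coefA \<beta> \<alpha> a b + coefB \<beta> \<alpha> a b) = - (node_term a \<beta> \<alpha> b + node_term \<alpha> \<beta> a b)"
proof -
  have \<beta>: "\<beta> = - (\<alpha> + a + b)" using sum by simp
  have "8 * (1 - \<alpha>*a) * coefh \<alpha> a = 2 * (a + \<alpha>) * (2*(a*\<alpha>)*(1 - a*\<alpha>) - (a - \<alpha>)^2)"
    using assms(3) unfolding coefh_def by (simp add: field_simps)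
  moreover have "2 * (a + \<alpha>) * (2*(a*\<alpha>)*(1 - a*\<alpha>) - (a - \<alpha>)^2)
      + (1 - \<alpha>*a) * (- 8 * coefA \<beta> \<alpha> a b + 8 * coefB \<beta> \<alpha> a b + node_term a \<beta> \<alpha> b + node_term \<alpha> \<beta> a b)
      = - 2 * (a + \<alpha>) * ((1 - \<alpha>*a) * (b^2 + (a + \<alpha>)*b - 3) + (a - \<alpha>)^2)"
    unfolding coefA_def coefB_def node_term_def \<beta> by algebra
  ultimately have "(1 - \<alpha>*a) * (8 * (coefh \<alpha> a - coefA \<beta> \<alpha> a b + coefB \<beta> \<alpha> a b)
      + node_term a \<beta> \<alpha> b + node_term \<alpha> \<beta> a b) = 0"
    unfolding con by algebra
  then show ?thesis using assms(3) by simp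
qed

lemma sys_of_node_values:
  fixes \<beta> \<alpha> a b c e :: real
  assumes sum: "\<beta> + \<alpha> + a + b = 0"
    and con: "(1 - \<alpha>*a) * (b^2 + (a + \<alpha>)*b - 3) + (a - \<alpha>)^2 = 0"
    and w: "c * (4*e + node_term \<beta> \<alpha> a b) = - 4 * mu" "c * (4*e + node_term \<alpha> \<beta> a b) = - 4"
      "c * (4*e + node_term a \<beta> \<alpha> b) = 4" "c * (4*e + node_term b \<beta> \<alpha> a) = 4 * lam"
  shows "sys lam mu \<alpha> a"
proof -
  define K\<beta> K\<alpha> Ka Kb where "K\<beta> = node_term \<beta> \<alpha> a b" and "K\<alpha> = node_term \<alpha> \<beta> a b"
    and "Ka = node_term a \<beta> \<alpha> b" and "Kb = node_term b \<beta> \<alpha> a"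
  note w = w[folded K\<beta>_def K\<alpha>_def Ka_def Kb_def]
  note F = node_term_identities[OF sum con, folded K\<beta>_def K\<alpha>_def Ka_def Kb_def]
  have c1: "c * (Ka - K\<alpha>) = 8"
    and lm: "4 * (lam - mu) = c * (Kb + K\<beta> - Ka - K\<alpha>)" and lp: "4 * (lam + mu) = c * (Kb - K\<beta>)"
    using w by algebra+
  have "8 * ((lam - mu) * (a - \<alpha>)^3) = (c * (Ka - K\<alpha>)) * ((1 - a*\<alpha>) * (Kb + K\<beta> - Ka - K\<alpha>))"
    using lm F(1) by algebra
  also have "\<dots> = 8 * (- 2 * skew \<alpha> a)" unfolding c1 F(2) by simp
  finally have eq1: "(lam - mu) * (a - \<alpha>)^3 = - 2 * skew \<alpha> a" by simp
  have "8 * ((lam + mu) * (a - \<alpha>)^3) = (c * (Ka - K\<alpha>)) * (1 - a*\<alpha>) * (Kb - K\<beta>)"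
    using lp F(1) by algebra
  also have "\<dots> = 8 * (2 * (1 - a*\<alpha>) * (3 + a*\<alpha>) * (b - \<beta>))" unfolding c1 F(3) by algebra
  finally have "((lam + mu) * (a - \<alpha>)^3)^2 = 4 * (3 + a*\<alpha>)^2 * (1 - a*\<alpha>) * ((1 - a*\<alpha>) * (b - \<beta>)^2)"
    by algebra
  then have eq2: "((lam + mu) * (a - \<alpha>)^3)^2 = 4 * (3 + a*\<alpha>)^3 * (1 - a*\<alpha>) * (4 - (a + \<alpha>)^2)"
    unfolding F(4) by algebra
  show "sys lam mu \<alpha> a"
    unfolding sys_def
  proof
    show "2 * (a + \<alpha>) * (3 - a*\<alpha> - a - \<alpha>) * (3 - a*\<alpha> + a + \<alpha>) + (lam - mu) * (a - \<alpha>)^3 = 0"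
      using eq1 unfolding skew_def by algebra
    show "(lam + mu)^2 * (a - \<alpha>)^6 = 4 * (3 + a*\<alpha>)^3 * (1 - a*\<alpha>) * (2 + a + \<alpha>) * (2 - a - \<alpha>)"
      using eq2 by algebra
  qed
qed

lemma partial_fraction_values_sys:
  fixes f :: "real \<Rightarrow> real"
  assumes ord: "\<beta> < -1" "-1 < \<alpha>" "\<alpha> < a" "a < 1" "1 < b"
    and sum: "\<beta> + \<alpha> + a + b = 0"
    and con: "(1 - \<alpha>*a) * (b^2 + (a + \<alpha>)*b - 3) + (a - \<alpha>)^2 = 0"
    and rep: "\<And>z. z \<noteq> 1 \<Longrightarrow> z \<noteq> -1 \<Longrightarrow>
                f z = c * (e + z + coefA \<beta> \<alpha> a b / (1 - z) - coefB \<beta> \<alpha> a b / (1 + z))"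
    and val: "f \<beta> = - mu" "f \<alpha> = -1" "f a = 1" "f b = lam"
  shows "sys lam mu \<alpha> a" "c \<noteq> 0" "\<And>z. z \<noteq> 1 \<Longrightarrow> z \<noteq> -1 \<Longrightarrow> f z = c * Hfun \<beta> \<alpha> a b z"
proof -
  have "\<forall>r \<in> {\<beta>, \<alpha>, a, b}. r \<noteq> 1 \<and> r \<noteq> -1" using ord by auto
  note nodes = partial_fraction_at_nodes[OF this, of e]
  have "4 * f r = c * (4 * (e + r + coefA \<beta> \<alpha> a b / (1 - r) - coefB \<beta> \<alpha> a b / (1 + r)))"
    if "r \<in> {\<beta>, \<alpha>, a, b}" for r
    using rep[of r] that ord by auto
  note at_nodes = this[of \<beta>] this[of \<alpha>] this[of a] this[of b]
  have w: "c * (4*e + node_term \<beta> \<alpha> a b) = - 4 * mu" "c * (4*e + node_term \<alpha> \<beta> a b) = - 4"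
    "c * (4*e + node_term a \<beta> \<alpha> b) = 4" "c * (4*e + node_term b \<beta> \<alpha> a) = 4 * lam"
    using at_nodes val unfolding nodes by simp_all
  show "sys lam mu \<alpha> a" by (rule sys_of_node_values[OF sum con w])
  show c: "c \<noteq> 0" using w(3) by auto
  have "c * (8*e + node_term a \<beta> \<alpha> b + node_term \<alpha> \<beta> a b) = 0"
    using w(2,3) by algebra
  with c have e: "8*e = - (node_term a \<beta> \<alpha> b + node_term \<alpha> \<beta> a b)"
    by simp
  have "1 - \<alpha>*a \<noteq> 0" using one_minus_mult_pos[of \<alpha> a] ord by simp
  then have h: "coefh \<alpha> a - coefA \<beta> \<alpha> a b + coefB \<beta> \<alpha> a b = e"
    using coefh_eq_node_terms[OF sum con] e by simp
  fix z :: real assume z: "z \<noteq> 1" "z \<noteq> -1"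
  then have "1 - z \<noteq> 0" "1 + z \<noteq> 0" by auto
  then have "e + z + coefA \<beta> \<alpha> a b / (1 - z) - coefB \<beta> \<alpha> a b / (1 + z) = Hfun \<beta> \<alpha> a b z"
    unfolding Hfun_def h[symmetric] by (simp add: field_simps)
  then show "f z = c * Hfun \<beta> \<alpha> a b z" using rep[OF z] by simp
qed

section \<open>Identification of \<open>P/Q\<close> with \<open>G\<close> and \<open>H\<close>\<close>

lemma Hfun_over_z_tendsto: "((\<lambda>z. Hfun \<beta> \<alpha> a b z / z) \<longlongrightarrow> 1) at_top"
  unfolding Hfun_def by real_asymp

lemma isGtilde_eq_scaled_Hfun:
  assumes lam: "1 < lam" and mu: "1 < mu"
    and sol: "-1 < \<alpha>" "\<alpha> < a" "a < 1" "sys lam mu \<alpha> a"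
    and roots: "\<beta> < -1" "1 < b" "quad \<alpha> a \<beta> = 0" "quad \<alpha> a b = 0"
    and G: "isGtilde lam mu P Q"
  obtains c where "c \<noteq> 0" "ratfun P Q a = 1"
    "\<And>z. z \<noteq> 1 \<Longrightarrow> z \<noteq> -1 \<Longrightarrow> ratfun P Q z = c * Hfun \<beta> \<alpha> a b z"
proof -
  obtain \<beta>' \<alpha>' a' b' c e where ord: "\<beta>' < -1" "-1 < \<alpha>'" "\<alpha>' < a'" "a' < 1" "1 < b'"
    and sum: "\<beta>' + \<alpha>' + a' + b' = 0"
    and con: "(1 - \<alpha>'*a') * (b'^2 + (a' + \<alpha>')*b' - 3) + (a' - \<alpha>')^2 = 0"
    and rep: "\<And>z. z \<noteq> 1 \<Longrightarrow> z \<noteq> -1 \<Longrightarrow>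
                ratfun P Q z = c * (e + z + coefA \<beta>' \<alpha>' a' b' / (1 - z) - coefB \<beta>' \<alpha>' a' b' / (1 + z))"
    and val: "ratfun P Q \<beta>' = - mu" "ratfun P Q \<alpha>' = -1" "ratfun P Q a' = 1" "ratfun P Q b' = lam"
    using isGtilde_partial_fractions[OF G] by blast
  note pf = partial_fraction_values_sys[OF ord sum con rep val]
  have "lam_of \<alpha>' a' = lam" "mu_of \<alpha>' a' = mu" "lam_of \<alpha> a = lam" "mu_of \<alpha> a = mu"
    using sys_iff_lam_of_mu_of pf(1) sol ord lam mu by auto
  then have \<alpha>': "\<alpha>' = \<alpha>" and a': "a' = a"
    using lam_of_mu_of_inj[of \<alpha>' a' \<alpha> a] ord sol by auto
  have "1 - \<alpha>*a \<noteq> 0" using one_minus_mult_pos[of \<alpha> a] sol by simp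
  then have "quad \<alpha> a b' = 0"
    using con by (simp add: quad_eq_0_iff \<alpha>' a')
  moreover have "\<beta>' = - (a + \<alpha>) - b'" using sum \<alpha>' a' by simp
  ultimately have "quad \<alpha> a \<beta>' = 0" "quad \<alpha> a b' = 0"
    by (simp_all only: quad_reflect)
  then have "\<beta>' = \<beta>" "b' = b"
    using quad_root_unique_outside sol roots ord by blast+
  then show thesis
    using that[of c] pf(2,3) val(3) \<alpha>' a' by auto
qed

lemma Gfun_eq_ratfun:
  assumes "1 < lam" "1 < mu" "-1 < \<alpha> \<and> \<alpha> < a \<and> a < 1 \<and> sys lam mu \<alpha> a"
    and "\<beta> < -1 \<and> 1 < b \<and> quad \<alpha> a \<beta> = 0 \<and> quad \<alpha> a b = 0" "isGtilde lam mu P Q"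
    and "z \<noteq> 1 \<and> z \<noteq> -1"
  shows "Gfun \<beta> \<alpha> a b z = ratfun P Q z"
proof -
  obtain c where c: "c \<noteq> 0" "ratfun P Q a = 1"
    and H: "\<And>z. z \<noteq> 1 \<Longrightarrow> z \<noteq> -1 \<Longrightarrow> ratfun P Q z = c * Hfun \<beta> \<alpha> a b z"
    using isGtilde_eq_scaled_Hfun assms(1-5) by metis
  have "Hfun \<beta> \<alpha> a b a = 1 / c"
    using H[of a] c assms(3) by (simp add: field_simps)
  then show ?thesis
    unfolding Gfun_def using H[of z] assms(6) c by simp
qed

lemma Hfun_eq_normalized_ratfun:
  assumes "1 < lam" "1 < mu" "-1 < \<alpha> \<and> \<alpha> < a \<and> a < 1 \<and> sys lam mu \<alpha> a"
    and "\<beta> < -1 \<and> 1 < b \<and> quad \<alpha> a \<beta> = 0 \<and> quad \<alpha> a b = 0" "isGtilde lam mu P Q"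
    and lim: "((\<lambda>z. c0 * ratfun P Q z / z) \<longlongrightarrow> 1) at_top"
    and "z \<noteq> 1 \<and> z \<noteq> -1"
  shows "Hfun \<beta> \<alpha> a b z = c0 * ratfun P Q z"
proof -
  obtain c where c: "c \<noteq> 0"
    and H: "\<And>z. z \<noteq> 1 \<Longrightarrow> z \<noteq> -1 \<Longrightarrow> ratfun P Q z = c * Hfun \<beta> \<alpha> a b z"
    using isGtilde_eq_scaled_Hfun assms(1-5) by metis
  have "eventually (\<lambda>z. c0 * c * (Hfun \<beta> \<alpha> a b z / z) = c0 * ratfun P Q z / z) at_top"
    using eventually_gt_at_top[of 1] by eventually_elim (simp add: H)
  with lim have l1: "((\<lambda>z. c0 * c * (Hfun \<beta> \<alpha> a b z / z)) \<longlongrightarrow> 1) at_top"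
    by (rule tendsto_cong[THEN iffD2, rotated])
  have l2: "((\<lambda>z. c0 * c * (Hfun \<beta> \<alpha> a b z / z)) \<longlongrightarrow> c0 * c * 1) at_top"
    by (intro tendsto_mult_left Hfun_over_z_tendsto)
  have "c0 * c * 1 = 1"
    by (rule tendsto_unique[OF _ l2 l1]) simp
  then show ?thesis
    using H[of z] assms(7) by (simp add: algebra_simps)
qed

theorem lemma4p3:
  fixes lam mu :: real
  assumes "lam > 1" and "mu > 1"
  shows "(\<exists>\<alpha> a. -1 < \<alpha> \<and> \<alpha> < a \<and> a < 1 \<and> sys lam mu \<alpha> a) \<and>
    (\<forall>\<alpha> a. -1 < \<alpha> \<and> \<alpha> < a \<and> a < 1 \<and> sys lam mu \<alpha> a \<longrightarrow>
       (\<exists>\<beta> b. \<beta> < -1 \<and> 1 < b \<and> quad \<alpha> a \<beta> = 0 \<and> quad \<alpha> a b = 0) \<and>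
       (\<forall>\<beta> b. \<beta> < -1 \<and> 1 < b \<and> quad \<alpha> a \<beta> = 0 \<and> quad \<alpha> a b = 0 \<longrightarrow>
          (\<forall>P Q. isGtilde lam mu P Q \<longrightarrow>
             (\<forall>z. z \<noteq> 1 \<and> z \<noteq> -1 \<longrightarrow> Gfun \<beta> \<alpha> a b z = ratfun P Q z) \<and>
             (\<forall>c>0. ((\<lambda>z. c * ratfun P Q z / z) \<longlongrightarrow> 1) at_top \<longrightarrow>
                (\<forall>z. z \<noteq> 1 \<and> z \<noteq> -1 \<longrightarrow> Hfun \<beta> \<alpha> a b z = c * ratfun P Q z)))))"
proof (intro conjI allI impI)
  obtain \<alpha> a where "-1 < \<alpha>" "\<alpha> < a" "a < 1" "lam_of \<alpha> a = lam" "mu_of \<alpha> a = mu"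
    using lam_of_mu_of_surj[OF assms] .
  moreover from assms have "0 \<le> lam + mu" by simp
  ultimately show "\<exists>\<alpha> a. -1 < \<alpha> \<and> \<alpha> < a \<and> a < 1 \<and> sys lam mu \<alpha> a"
    using sys_iff_lam_of_mu_of by blast
next
  fix \<alpha> a assume "-1 < \<alpha> \<and> \<alpha> < a \<and> a < 1 \<and> sys lam mu \<alpha> a"
  then show "\<exists>\<beta> b. \<beta> < -1 \<and> 1 < b \<and> quad \<alpha> a \<beta> = 0 \<and> quad \<alpha> a b = 0"
    by (metis quad_roots_outside)
qed (use Gfun_eq_ratfun Hfun_eq_normalized_ratfun assms in blast)+

end
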